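(* In the setting below, if $X_0$ and $Y_0$ agree on $G$ (e.g. both all-plus), there is a coupling of the continuous-time speed-up dynamics $(X_t)$ on $T$ and $(Y_t)$ on $F$ such that, with $\tau=\inf\{t: X_t(u)\ne Y_t(u)\text{ for some }u\in G\}$, $$\mathbb P(\tau>t)\ge\exp(-\theta^{r-\ell}b^\ell t)\quad\text{for all }t\ge0.$$
   Context: Let $b\ge2$, $\beta>0$, $\theta=\tanh\beta$, and $T$ the $b$-ary tree of height $h$ (root $\rho$, every vertex at distance $<h$ has $b$ children, $H_k$ = vertices at distance $k$, $T_u$ = subtree of $u$ and its descendants), with the free-boundary Ising Gibbs measure $\mu\propto\exp(\beta\sum_{uv}\sigma(u)\sigma(v))$. Fix integers $1\le\ell<r\le h$; for each $v\in H_\ell$ fix a descendant $w_v\in H_r$, and let $W=\{w_v\}$, $B_v=(T_v\setminus T_{w_v})\cup\{w_v\}$. $(X_t)$ is the continuous-time block dynamics on $T$ with blocks $\{B_v:v\in H_\ell\}\cup\{\{u\}:u\notin W\}$: each block has an independent rate-one Poisson clock and, when it rings, its spins are resampled from $\mu$ conditioned on the spins outside it. Let $L_v$ be the path from $v$ to $w_v$ (inclusive) and let $F$ be the forest which is the disjoint union over $v\in H_\ell$ of the trees $L_v\cup T_{w_v}$ (rooted at $v$, with no parent), viewed as a separate graph naturally identified with a subset of $T$, carrying its own free-boundary Ising measure at $\beta$. $(Y_t)$ is the continuous-time block dynamics on $F$ with blocks $\{L_v:v\in H_\ell\}\cup\{\{u\}:u\in F\setminus W\}$, each at rate one. $G=\bigcup_{v\in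 H_\ell}T_{w_v}$. *)

theory Defs
  imports Complex_Main "HOL-Library.Sublist"
begin

text \<open>Vertices are words over {0..<b} of length at most h; the root is [],
  the children of u are u @ [i] for i < b.\<close>

definition tree_vertices :: "nat \<Rightarrow> nat \<Rightarrow> nat list set" where
  "tree_vertices b h = {u. length u \<le> h \<and> set u \<subseteq> {..<b}}"

definition level :: "nat \<Rightarrow> nat \<Rightarrow> nat \<Rightarrow> nat list set" where
  "level b h k = {u \<in> tree_vertices b h. length u = k}"

definition subtree :: "nat \<Rightarrow> nat \<Rightarrow> nat list \<Rightarrow> nat list set" where
  "subtree b h u = {x \<in> tree_vertices b h. prefix u x}"

definition edges :: "nat list set \<Rightarrow> (nat list \<times> nat list) set" where
  "edges V = {(u, u @ [i]) | u i. u \<in> V \<and> u @ [i] \<in> V}"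

definition confs :: "nat list set \<Rightarrow> (nat list \<Rightarrow> real) set" where
  "confs V = {\<sigma>. (\<forall>u\<in>V. \<sigma> u = 1 \<or> \<sigma> u = -1) \<and> (\<forall>u. u \<notin> V \<longrightarrow> \<sigma> u = 1)}"

definition gibbs_weight :: "real \<Rightarrow> nat list set \<Rightarrow> (nat list \<Rightarrow> real) \<Rightarrow> real" where
  "gibbs_weight \<beta> V \<sigma> = exp (\<beta> * (\<Sum>e\<in>edges V. \<sigma> (fst e) * \<sigma> (snd e)))"

definition ising :: "real \<Rightarrow> nat list set \<Rightarrow> (nat list \<Rightarrow> real) \<Rightarrow> real" where
  "ising \<beta> V \<sigma> = (if \<sigma> \<in> confs V
      then gibbs_weight \<beta> V \<sigma> / (\<Sum>\<eta>\<in>confs V. gibbs_weight \<beta> V \<eta>) else 0)"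

text \<open>Heat-bath update of block B: resample spins in B from the Gibbs measure
  conditioned on the spins outside B.\<close>
definition block_kernel ::
  "real \<Rightarrow> nat list set \<Rightarrow> nat list set \<Rightarrow> (nat list \<Rightarrow> real) \<Rightarrow> (nat list \<Rightarrow> real) \<Rightarrow> real" where
  "block_kernel \<beta> V B \<sigma> \<sigma>' =
     (if \<sigma>' \<in> confs V \<and> (\<forall>u\<in>V - B. \<sigma>' u = \<sigma> u)
      then ising \<beta> V \<sigma>' / (\<Sum>\<eta>\<in>{\<eta>\<in>confs V. \<forall>u\<in>V - B. \<eta> u = \<sigma> u}. ising \<beta> V \<eta>)
      else 0)"

text \<open>Off-diagonal jump rates of continuous-time block dynamics, each block with a
  rate-one Poisson clock.\<close>
definition block_rate ::
  "real \<Rightarrow> nat list set \<Rightarrow> nat list set set \<Rightarrow> (nat list \<Rightarrow> real) \<Rightarrow> (nat list \<Rightarrow> real) \<Rightarrow> real" where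
  "block_rate \<beta> V Bs \<sigma> \<sigma>' = (\<Sum>B\<in>Bs. block_kernel \<beta> V B \<sigma> \<sigma>')"

fun mpow :: "'s set \<Rightarrow> ('s \<Rightarrow> 's \<Rightarrow> real) \<Rightarrow> nat \<Rightarrow> 's \<Rightarrow> 's \<Rightarrow> real" where
  "mpow S M 0 z z' = (if z = z' then 1 else 0)"
| "mpow S M (Suc n) z z' = (\<Sum>y\<in>S. M z y * mpow S M n y z')"

definition mexp :: "'s set \<Rightarrow> ('s \<Rightarrow> 's \<Rightarrow> real) \<Rightarrow> real \<Rightarrow> 's \<Rightarrow> 's \<Rightarrow> real" where
  "mexp S M t z z' = (\<Sum>n. t ^ n / fact n * mpow S M n z z')"

text \<open>For a chain on finite S with off-diagonal rates Q, the probability, started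
  from z0, of staying in A \<subseteq> S during the whole time interval [0,t], i.e. the
  row sum of exp(t Q_A) with Q_A the generator killed on leaving A.\<close>
definition stay_prob :: "'s set \<Rightarrow> ('s \<Rightarrow> 's \<Rightarrow> real) \<Rightarrow> 's set \<Rightarrow> 's \<Rightarrow> real \<Rightarrow> real" where
  "stay_prob S Q A z0 t =
     (\<Sum>z\<in>A. mexp A (\<lambda>x y. if x = y then - (\<Sum>y'\<in>S - {x}. Q x y') else Q x y) t z0 z)"

text \<open>Q (off-diagonal rates on S1 \<times> S2) is a Markovian coupling of the chains with
  off-diagonal rates L1 on S1 and L2 on S2.\<close>
definition markov_coupling ::
  "'a set \<Rightarrow> ('a \<Rightarrow> 'a \<Rightarrow> real) \<Rightarrow> 'b set \<Rightarrow> ('b \<Rightarrow> 'b \<Rightarrow> real)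
   \<Rightarrow> ('a \<times> 'b \<Rightarrow> 'a \<times> 'b \<Rightarrow> real) \<Rightarrow> bool" where
  "markov_coupling S1 L1 S2 L2 Q \<longleftrightarrow>
     (\<forall>z\<in>S1 \<times> S2. \<forall>z'\<in>S1 \<times> S2. z' \<noteq> z \<longrightarrow> Q z z' \<ge> 0) \<and>
     (\<forall>x\<in>S1. \<forall>y\<in>S2. \<forall>x'\<in>S1. x' \<noteq> x \<longrightarrow> (\<Sum>y'\<in>S2. Q (x, y) (x', y')) = L1 x x') \<and>
     (\<forall>x\<in>S1. \<forall>y\<in>S2. \<forall>y'\<in>S2. y' \<noteq> y \<longrightarrow> (\<Sum>x'\<in>S1. Q (x, y) (x', y')) = L2 y y')"

definition path_L :: "nat list \<Rightarrow> nat list \<Rightarrow> nat list set" where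
  "path_L v wv = {x. prefix v x \<and> prefix x wv}"

definition block_B :: "nat \<Rightarrow> nat \<Rightarrow> nat list \<Rightarrow> nat list \<Rightarrow> nat list set" where
  "block_B b h v wv = (subtree b h v - subtree b h wv) \<union> {wv}"

definition forest_F :: "nat \<Rightarrow> nat \<Rightarrow> nat \<Rightarrow> (nat list \<Rightarrow> nat list) \<Rightarrow> nat list set" where
  "forest_F b h l w = (\<Union>v\<in>level b h l. path_L v (w v) \<union> subtree b h (w v))"

definition set_G :: "nat \<Rightarrow> nat \<Rightarrow> nat \<Rightarrow> (nat list \<Rightarrow> nat list) \<Rightarrow> nat list set" where
  "set_G b h l w = (\<Union>v\<in>level b h l. subtree b h (w v))"

definition blocks_X :: "nat \<Rightarrow> nat \<Rightarrow> nat \<Rightarrow> (nat list \<Rightarrow> nat list) \<Rightarrow> nat list set set" where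
  "blocks_X b h l w = (\<lambda>v. block_B b h v (w v)) ` level b h l
      \<union> (\<lambda>u. {u}) ` (tree_vertices b h - w ` level b h l)"

definition blocks_Y :: "nat \<Rightarrow> nat \<Rightarrow> nat \<Rightarrow> (nat list \<Rightarrow> nat list) \<Rightarrow> nat list set set" where
  "blocks_Y b h l w = (\<lambda>v. path_L v (w v)) ` level b h l
      \<union> (\<lambda>u. {u}) ` (forest_F b h l w - w ` level b h l)"

end

theory Submission
  imports Defs
begin

text \<open>
  The coupling is built block by block.  Every block of the tree
  dynamics X has a partner block of the forest dynamics Y: the block B_v is paired
  with the path L_v, a singleton {u} of the forest with the same singleton of the
  tree, and a singleton of the tree outside F with "Y does not move".  Each pair
  of heat-bath updates is coupled maximally with respect to one spin (w_v, resp. u),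
  so the pair of chains leaves the set A of pairs agreeing on G only at the rate
  by which the marginals of that spin differ.  For a singleton in G this
  difference is 0, since the single-site update only sees the neighbours, all of
  which lie in the same subtree T_{w_v}.  For the block B_v the high-temperature
  expansion exp(\<beta> \<sigma> \<sigma>') = cosh \<beta> (1 + \<theta> \<sigma> \<sigma>') shows that, conditioned on the
  outside, the spin at w_v sees the parent of v only through the path L_v, which
  damps its influence by \<theta>^(r-l+1); this bounds the difference of marginals by
  \<theta>^(r-l).  Summing over the b^l blocks bounds the leaving rate of A by
  \<theta>^(r-l) b^l, and a general bound on the survival probability of a killed
  continuous-time chain turns this into the exponential estimate.
\<close>

section \<open>Survival of a killed continuous-time chain\<close>

text \<open>Pascal's rule in the form needed to step the binomial expansion of (N - K I)^n.\<close>
lemma binom_shift: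
  fixes a :: "nat \<Rightarrow> real"
  shows "(\<Sum>i\<le>n. real (n choose i) * c^(n-i) * a (Suc i)) + c * (\<Sum>i\<le>n. real (n choose i) * c^(n-i) * a i)
       = (\<Sum>i\<le>Suc n. real (Suc n choose i) * c^(Suc n - i) * a i)"
proof -
  have rhs: "(\<Sum>i\<le>Suc n. real (Suc n choose i) * c^(Suc n - i) * a i)
     = c^(Suc n) * a 0 + (\<Sum>j\<le>n. real (n choose j) * c^(n-j) * a (Suc j))
        + (\<Sum>j\<le>n. real (n choose Suc j) * c^(n-j) * a (Suc j))"
    by (simp only: sum.atMost_Suc_shift binomial_Suc_Suc of_nat_add sum.distrib distrib_left distrib_right)
       (simp add: algebra_simps)
  have lhs: "c * (\<Sum>i\<le>n. real (n choose i) * c^(n-i) * a i)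
     = c^(Suc n) * a 0 + (\<Sum>j\<le>n. real (n choose Suc j) * c^(n-j) * a (Suc j))"
  proof (cases n)
    case 0 then show ?thesis by simp
  next
    case (Suc k)
    have split0: "(\<Sum>i\<le>n. real (n choose i) * c^(n-i) * a i)
       = c^n * a 0 + (\<Sum>j\<le>k. real (n choose Suc j) * c^(n - Suc j) * a (Suc j))"
      using Suc by (simp add: sum.atMost_Suc_shift del: sum.atMost_Suc)
    have drop_top: "(\<Sum>j\<le>n. real (n choose Suc j) * c^(n-j) * a (Suc j))
        = (\<Sum>j\<le>k. real (n choose Suc j) * c^(n-j) * a (Suc j))"
      using Suc by (simp del: binomial_Suc_Suc)
    have shift: "c * (\<Sum>j\<le>k. real (n choose Suc j) * c^(n - Suc j) * a (Suc j))
        = (\<Sum>j\<le>k. real (n choose Suc j) * c^(n-j) * a (Suc j))"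
      unfolding sum_distrib_left
    proof (rule sum.cong[OF refl])
      fix j assume "j \<in> {..k}"
      then have "n - j = Suc (n - Suc j)" using Suc by auto
      then show "c * (real (n choose Suc j) * c ^ (n - Suc j) * a (Suc j)) =
         real (n choose Suc j) * c ^ (n - j) * a (Suc j)" by simp
    qed
    show ?thesis using split0 drop_top shift by (simp add: algebra_simps)
  qed
  show ?thesis using rhs lhs by simp
qed

text \<open>Binomial expansion of the powers of M = N - K I (N and the identity commute).\<close>
lemma mpow_binom:
  assumes fin: "finite A" and MN: "\<forall>x\<in>A. \<forall>y\<in>A. M x y = N x y - (if x = y then K else 0)"
  shows "x \<in> A \<Longrightarrow> mpow A M n x z = (\<Sum>i\<le>n. real (n choose i) * (-K)^(n-i) * mpow A N i x z)"
proof (induction n arbitrary: x)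
  case 0 then show ?case by simp
next
  case (Suc n)
  let ?S = "\<lambda>y. (\<Sum>i\<le>n. real (n choose i) * (-K)^(n-i) * mpow A N i y z)"
  have "mpow A M (Suc n) x z = (\<Sum>y\<in>A. M x y * ?S y)"
    using Suc by simp
  also have "\<dots> = (\<Sum>y\<in>A. N x y * ?S y) - (\<Sum>y\<in>A. (if x = y then K else 0) * ?S y)"
    using MN Suc.prems by (simp add: sum_subtractf[symmetric] left_diff_distrib)
  also have "(\<Sum>y\<in>A. (if x = y then K else 0) * ?S y) = K * ?S x"
  proof -
    have "(\<Sum>y\<in>A. (if x = y then K else 0) * ?S y) = (\<Sum>y\<in>A. if x = y then K * ?S y else 0)"
      by (rule sum.cong) auto
    then show ?thesis using fin Suc.prems by (simp add: sum.delta)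
  qed
  also have "(\<Sum>y\<in>A. N x y * ?S y) = (\<Sum>i\<le>n. real (n choose i) * (-K)^(n-i) * mpow A N (Suc i) x z)"
  proof -
    have "(\<Sum>y\<in>A. N x y * ?S y) = (\<Sum>y\<in>A. \<Sum>i\<le>n. real (n choose i) * (-K)^(n-i) * (N x y * mpow A N i y z))"
      by (simp add: sum_distrib_left mult_ac)
    also have "\<dots> = (\<Sum>i\<le>n. \<Sum>y\<in>A. real (n choose i) * (-K)^(n-i) * (N x y * mpow A N i y z))"
      by (rule sum.swap)
    also have "\<dots> = (\<Sum>i\<le>n. real (n choose i) * (-K)^(n-i) * mpow A N (Suc i) x z)"
      by (simp add: sum_distrib_left)
    finally show ?thesis .
  qed
  finally have "mpow A M (Suc n) x z = (\<Sum>i\<le>n. real (n choose i) * (-K)^(n-i) * mpow A N (Suc i) x z)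
      + (-K) * ?S x" by simp
  also have "\<dots> = (\<Sum>i\<le>Suc n. real (Suc n choose i) * (-K)^(Suc n - i) * mpow A N i x z)"
    by (rule binom_shift)
  finally show ?case .
qed

text \<open>Entrywise growth bound for matrix powers; it makes the exponential series
  converge.\<close>
lemma mpow_bound:
  assumes fin: "finite A" and m: "\<forall>x\<in>A. \<forall>y\<in>A. \<bar>P x y\<bar> \<le> m"
  shows "x \<in> A \<Longrightarrow> \<bar>mpow A P n x z\<bar> \<le> (real (card A) * m)^n"
proof (induction n arbitrary: x)
  case 0 then show ?case by simp
next
  case (Suc n)
  have m0: "m \<ge> 0" using m Suc.prems by (meson abs_ge_zero order_trans)
  have "\<bar>mpow A P (Suc n) x z\<bar> \<le> (\<Sum>y\<in>A. \<bar>P x y\<bar> * \<bar>mpow A P n y z\<bar>)"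
    by (simp add: abs_mult[symmetric] sum_abs)
  also have "\<dots> \<le> (\<Sum>y\<in>A. m * (real (card A) * m)^n)"
    by (rule sum_mono) (use Suc m m0 in \<open>auto intro!: mult_mono\<close>)
  also have "\<dots> = (real (card A) * m)^Suc n" by simp
  finally show ?case .
qed

lemma mexp_summable:
  assumes fin: "finite A" and m: "\<forall>x\<in>A. \<forall>y\<in>A. \<bar>P x y\<bar> \<le> m" and x: "x \<in> A"
  shows "summable (\<lambda>n. norm (t ^ n / fact n * mpow A P n x z))"
proof (rule summable_comparison_test[OF _ summable_exp[of "\<bar>t\<bar> * (real (card A) * m)"]])
  show "\<exists>N. \<forall>n\<ge>N. norm (norm (t ^ n / fact n * mpow A P n x z)) \<le> inverse (fact n) * (\<bar>t\<bar> * (real (card A) * m)) ^ n"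
  proof (intro exI allI impI)
    fix n :: nat
    have "\<bar>mpow A P n x z\<bar> \<le> (real (card A) * m)^n" using mpow_bound[OF fin m x] .
    then have "\<bar>t\<bar>^n * \<bar>mpow A P n x z\<bar> \<le> \<bar>t\<bar>^n * (real (card A) * m)^n"
      by (intro mult_left_mono) auto
    then show "norm (norm (t ^ n / fact n * mpow A P n x z)) \<le> inverse (fact n) * (\<bar>t\<bar> * (real (card A) * m)) ^ n"
      by (simp add: abs_mult power_abs power_mult_distrib divide_inverse mult_ac mult_left_mono)
  qed
qed

lemma mpow_rowsum_ge:
  assumes fin: "finite A" and Nn: "\<forall>x\<in>A. \<forall>y\<in>A. N x y \<ge> 0"
    and rows: "\<forall>x\<in>A. (\<Sum>y\<in>A. N x y) \<ge> d" and d: "d \<ge> 0"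
  shows "x \<in> A \<Longrightarrow> (\<Sum>z\<in>A. mpow A N n x z) \<ge> d ^ n"
proof (induction n arbitrary: x)
  case 0 then show ?case using fin by (simp add: sum.delta)
next
  case (Suc n)
  have eq: "(\<Sum>z\<in>A. mpow A N (Suc n) x z) = (\<Sum>y\<in>A. N x y * (\<Sum>z\<in>A. mpow A N n y z))"
  proof -
    have "(\<Sum>z\<in>A. mpow A N (Suc n) x z) = (\<Sum>z\<in>A. \<Sum>y\<in>A. N x y * mpow A N n y z)" by simp
    also have "\<dots> = (\<Sum>y\<in>A. \<Sum>z\<in>A. N x y * mpow A N n y z)" by (rule sum.swap)
    finally show ?thesis by (simp add: sum_distrib_left)
  qed
  have "d * d ^ n \<le> (\<Sum>y\<in>A. N x y) * d ^ n" using rows Suc.prems d by (intro mult_right_mono) auto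
  also have "\<dots> = (\<Sum>y\<in>A. N x y * d ^ n)" by (simp add: sum_distrib_right)
  also have "\<dots> \<le> (\<Sum>y\<in>A. N x y * (\<Sum>z\<in>A. mpow A N n y z))"
    by (rule sum_mono) (use Suc Nn in \<open>auto intro!: mult_left_mono\<close>)
  finally show ?case using eq by simp
qed

text \<open>Shifting the diagonal by a constant K multiplies the matrix exponential by
  exp(-K t): the two matrices commute, and the identity is verified on the
  power series through the Cauchy product and the binomial expansion above.\<close>
lemma mexp_diagonal_shift:
  assumes fin: "finite A" and MN: "\<forall>x\<in>A. \<forall>y\<in>A. M x y = N x y - (if x = y then K else 0)"
    and bound: "\<forall>x\<in>A. \<forall>y\<in>A. \<bar>N x y\<bar> \<le> m" and x: "x \<in> A"
  shows "mexp A M t x z = exp (-K * t) * mexp A N t x z"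
proof -
  define a where "a = (\<lambda>i. t ^ i / fact i * mpow A N i x z)"
  define c where "c = (\<lambda>j::nat. (-K * t) ^ j / fact j)"
  have sa: "summable (\<lambda>k. norm (a k))" unfolding a_def by (rule mexp_summable[OF fin bound x])
  have sc: "summable (\<lambda>k. norm (c k))" unfolding c_def using summable_norm_exp[of "-K*t"]
    by (simp add: divide_inverse scaleR_conv_of_real mult_ac)
  have ec: "(\<Sum>k. c k) = exp (-K * t)" unfolding c_def
    using exp_converges[of "-K*t"] by (simp add: sums_iff divide_inverse scaleR_conv_of_real mult_ac)
  have coeff: "t ^ k / fact k * mpow A M k x z = (\<Sum>i\<le>k. a i * c (k - i))" for k
  proof -
    have "t ^ k / fact k * mpow A M k x z
        = (\<Sum>i\<le>k. t ^ k / fact k * (real (k choose i) * (-K)^(k-i) * mpow A N i x z))"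
      using mpow_binom[OF fin MN x] by (simp add: sum_distrib_left)
    also have "\<dots> = (\<Sum>i\<le>k. a i * c (k - i))"
    proof (rule sum.cong[OF refl])
      fix i assume "i \<in> {..k}"
      then have ik: "i \<le> k" by simp
      have tk: "t ^ k = t ^ i * t ^ (k - i)" using ik by (simp add: power_add[symmetric])
      have ch: "real (k choose i) = fact k / (fact i * fact (k - i))" using binomial_fact[OF ik] by simp
      have "(-K * t) ^ (k - i) = (-K) ^ (k - i) * t ^ (k - i)" by (simp only: power_mult_distrib)
      then show "t ^ k / fact k * (real (k choose i) * (-K)^(k-i) * mpow A N i x z) = a i * c (k - i)"
        unfolding a_def c_def ch tk by (simp add: field_simps)
    qed
    finally show ?thesis .
  qed
  have "(\<Sum>k. a k) * (\<Sum>k. c k) = (\<Sum>k. \<Sum>i\<le>k. a i * c (k - i))"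
    by (rule Cauchy_product[OF sa sc])
  also have "\<dots> = (\<Sum>k. t ^ k / fact k * mpow A M k x z)" by (simp only: coeff)
  finally show ?thesis unfolding mexp_def ec by (simp add: a_def mult.commute)
qed

lemma mexp_nonneg_lower:
  assumes fin: "finite A" and bound: "\<forall>x\<in>A. \<forall>y\<in>A. \<bar>N x y\<bar> \<le> m"
    and Nn: "\<forall>x\<in>A. \<forall>y\<in>A. N x y \<ge> 0" and rows: "\<forall>x\<in>A. (\<Sum>y\<in>A. N x y) \<ge> d"
    and d: "d \<ge> 0" and t: "t \<ge> 0" and x: "x \<in> A"
  shows "(\<Sum>z\<in>A. mexp A N t x z) \<ge> exp (t * d)"
proof -
  have "(\<Sum>z\<in>A. mexp A N t x z) = (\<Sum>n. \<Sum>z\<in>A. t ^ n / fact n * mpow A N n x z)"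
    unfolding mexp_def
    by (rule suminf_sum[symmetric]) (rule summable_norm_cancel[OF mexp_summable[OF fin bound x]])
  also have "\<dots> \<ge> (\<Sum>n. t ^ n / fact n * d ^ n)"
  proof (rule suminf_le)
    fix n
    show "t ^ n / fact n * d ^ n \<le> (\<Sum>z\<in>A. t ^ n / fact n * mpow A N n x z)"
      unfolding sum_distrib_left[symmetric]
      using mpow_rowsum_ge[OF fin Nn rows d x, of n] t by (intro mult_left_mono) auto
    show "summable (\<lambda>n. t ^ n / fact n * d ^ n)"
      using summable_exp[of "t * d"] by (simp add: power_mult_distrib divide_inverse mult_ac)
    show "summable (\<lambda>n. \<Sum>z\<in>A. t ^ n / fact n * mpow A N n x z)"
      by (rule summable_sum) (rule summable_norm_cancel[OF mexp_summable[OF fin bound x]])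
  qed
  also have "(\<Sum>n. t ^ n / fact n * d ^ n) = exp (t * d)"
    using exp_converges[of "t * d"]
    by (simp add: sums_iff power_mult_distrib divide_inverse scaleR_conv_of_real mult_ac)
  finally show ?thesis .
qed

text \<open>Lower bound for the row sums of exp(t M) when M has nonnegative
  off-diagonal entries and row sums at least -c: shift M by a large multiple K of
  the identity to a nonnegative matrix N, so exp(t M) = exp(-K t) exp(t N).\<close>
lemma mexp_lower:
  assumes fin: "finite A" and c: "c \<ge> 0" and t: "t \<ge> 0"
   and offd: "\<forall>x\<in>A. \<forall>y\<in>A. x \<noteq> y \<longrightarrow> M x y \<ge> 0"
   and rows: "\<forall>x\<in>A. (\<Sum>y\<in>A. M x y) \<ge> -c"
   and x: "x \<in> A"
  shows "(\<Sum>z\<in>A. mexp A M t x z) \<ge> exp (-c * t)"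
proof -
  define S where "S = (\<Sum>x\<in>A. \<Sum>y\<in>A. \<bar>M x y\<bar>)"
  define K where "K = c + S"
  define N where "N = (\<lambda>x y. M x y + (if x = y then K else 0))"
  have entry: "\<bar>M x y\<bar> \<le> S" if "x \<in> A" "y \<in> A" for x y
  proof -
    have "\<bar>M x y\<bar> \<le> (\<Sum>y\<in>A. \<bar>M x y\<bar>)" using fin that by (intro member_le_sum) auto
    also have "\<dots> \<le> S" unfolding S_def using fin that by (intro member_le_sum sum_nonneg) auto
    finally show ?thesis .
  qed
  have S0: "S \<ge> 0" unfolding S_def by (intro sum_nonneg) auto
  have bound: "\<forall>x\<in>A. \<forall>y\<in>A. \<bar>N x y\<bar> \<le> S + K"
  proof (intro ballI)
    fix x y assume "x \<in> A" "y \<in> A"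
    then have "\<bar>M x y\<bar> \<le> S" by (rule entry)
    then show "\<bar>N x y\<bar> \<le> S + K" using S0 c unfolding N_def K_def by (smt (verit))
  qed
  have Nn: "\<forall>x\<in>A. \<forall>y\<in>A. N x y \<ge> 0"
  proof (intro ballI)
    fix x y assume xy: "x \<in> A" "y \<in> A"
    show "N x y \<ge> 0"
    proof (cases "x = y")
      case True
      then show ?thesis using entry[OF xy] c by (simp add: N_def K_def)
    next
      case False
      then show ?thesis using offd xy by (simp add: N_def)
    qed
  qed
  have rowsN: "\<forall>x\<in>A. (\<Sum>y\<in>A. N x y) \<ge> K - c"
  proof
    fix x assume xA: "x \<in> A"
    have "(\<Sum>y\<in>A. N x y) = (\<Sum>y\<in>A. M x y) + K"
      using fin xA by (simp add: N_def sum.distrib sum.delta)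
    then show "(\<Sum>y\<in>A. N x y) \<ge> K - c" using rows xA by auto
  qed
  have Kc: "K - c \<ge> 0" using S0 by (simp add: K_def)
  have MN: "\<forall>x\<in>A. \<forall>y\<in>A. M x y = N x y - (if x = y then K else 0)" by (simp add: N_def)
  have e: "(\<Sum>z\<in>A. mexp A N t x z) \<ge> exp (t * (K - c))"
    by (rule mexp_nonneg_lower[OF fin bound Nn rowsN Kc t x])
  have "(\<Sum>z\<in>A. mexp A M t x z) = exp (-K * t) * (\<Sum>z\<in>A. mexp A N t x z)"
    using mexp_diagonal_shift[OF fin MN bound x] by (simp add: sum_distrib_left)
  also have "\<dots> \<ge> exp (-K * t) * exp (t * (K - c))" using e by (intro mult_left_mono) auto
  also have "exp (-K * t) * exp (t * (K - c)) = exp (-c * t)" by (simp add: exp_add[symmetric] algebra_simps)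
  finally show ?thesis by simp
qed

lemma stay_prob_lower:
  assumes fin: "finite S" and AS: "A \<subseteq> S" and c: "c \<ge> 0" and t: "t \<ge> 0" and z0: "z0 \<in> A"
    and nonneg: "\<forall>z\<in>A. \<forall>z'\<in>A. z' \<noteq> z \<longrightarrow> Q z z' \<ge> 0"
    and leave: "\<forall>z\<in>A. (\<Sum>z'\<in>S - A. Q z z') \<le> c"
  shows "stay_prob S Q A z0 t \<ge> exp (-c * t)"
proof -
  define M where "M = (\<lambda>x y. if x = y then - (\<Sum>y'\<in>S - {x}. Q x y') else Q x y)"
  have finA: "finite A" using fin AS finite_subset by blast
  have rows: "\<forall>x\<in>A. (\<Sum>y\<in>A. M x y) \<ge> -c"
  proof
    fix x assume xA: "x \<in> A"
    have "(\<Sum>y\<in>A. M x y) = M x x + (\<Sum>y\<in>A - {x}. M x y)"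
      using finA xA by (simp add: sum.remove)
    also have "(\<Sum>y\<in>A - {x}. M x y) = (\<Sum>y\<in>A - {x}. Q x y)"
      by (rule sum.cong) (auto simp: M_def)
    also have "(\<Sum>y'\<in>S - {x}. Q x y') = (\<Sum>y\<in>A - {x}. Q x y) + (\<Sum>y\<in>S - A. Q x y)"
    proof -
      have "S - {x} = (A - {x}) \<union> (S - A)" using AS xA by auto
      moreover have "sum (Q x) (A - {x} \<union> (S - A)) = sum (Q x) (A - {x}) + sum (Q x) (S - A)"
        by (rule sum.union_disjoint) (use fin finA in auto)
      ultimately show ?thesis by simp
    qed
    then have "M x x = - ((\<Sum>y\<in>A - {x}. Q x y) + (\<Sum>y\<in>S - A. Q x y))" by (simp add: M_def)
    finally show "(\<Sum>y\<in>A. M x y) \<ge> -c" using leave xA by simp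
  qed
  have offd: "\<forall>x\<in>A. \<forall>y\<in>A. x \<noteq> y \<longrightarrow> M x y \<ge> 0" using nonneg by (auto simp: M_def)
  have "stay_prob S Q A z0 t = (\<Sum>z\<in>A. mexp A M t z0 z)" by (simp add: stay_prob_def M_def)
  also have "\<dots> \<ge> exp (-c * t)" by (rule mexp_lower[OF finA c t offd rows z0])
  finally show ?thesis .
qed

section \<open>Maximal coupling of two jump kernels through a statistic\<close>

definition stat_rate :: "'a set \<Rightarrow> ('a \<Rightarrow> 'a \<Rightarrow> real) \<Rightarrow> ('a \<Rightarrow> real) \<Rightarrow> 'a \<Rightarrow> real \<Rightarrow> real" where
  "stat_rate S1 \<mu> f x k = (\<Sum>a\<in>S1 - {x}. if f a = k then \<mu> x a else 0)"

text \<open>Maximal coupling of two jump kernels \<mu> on S1 and \<nu> on S2 through the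
  statistics f and g: a joint jump to (x',y') with f x' = g y' has rate \<mu> x x'
  \<nu> y y' divided by the larger of the two total rates towards the common
  value; the unmatched remainder of each kernel is performed alone, the other
  coordinate staying put.\<close>
definition coupled_rate :: "'a set \<Rightarrow> 'b set \<Rightarrow> ('a \<Rightarrow> 'a \<Rightarrow> real) \<Rightarrow> ('b \<Rightarrow> 'b \<Rightarrow> real)
   \<Rightarrow> ('a \<Rightarrow> real) \<Rightarrow> ('b \<Rightarrow> real) \<Rightarrow> 'a \<times> 'b \<Rightarrow> 'a \<times> 'b \<Rightarrow> real" where
  "coupled_rate S1 S2 \<mu> \<nu> f g z z' =
    (if fst z' \<noteq> fst z \<and> snd z' \<noteq> snd z \<and> f (fst z') = g (snd z')
       then \<mu> (fst z) (fst z') * \<nu> (snd z) (snd z')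
         / max (stat_rate S1 \<mu> f (fst z) (f (fst z'))) (stat_rate S2 \<nu> g (snd z) (f (fst z'))) else 0)
  + (if fst z' \<noteq> fst z \<and> snd z' = snd z
       then \<mu> (fst z) (fst z') * (1 - stat_rate S2 \<nu> g (snd z) (f (fst z'))
         / max (stat_rate S1 \<mu> f (fst z) (f (fst z'))) (stat_rate S2 \<nu> g (snd z) (f (fst z')))) else 0)
  + (if fst z' = fst z \<and> snd z' \<noteq> snd z
       then \<nu> (snd z) (snd z') * (1 - stat_rate S1 \<mu> f (fst z) (g (snd z'))
         / max (stat_rate S1 \<mu> f (fst z) (g (snd z'))) (stat_rate S2 \<nu> g (snd z) (g (snd z')))) else 0)"

lemma coupled_rate_pair: "coupled_rate S1 S2 \<mu> \<nu> f g (x, y) (x', y') =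
    (if x' \<noteq> x \<and> y' \<noteq> y \<and> f x' = g y'
       then \<mu> x x' * \<nu> y y' / max (stat_rate S1 \<mu> f x (f x')) (stat_rate S2 \<nu> g y (f x')) else 0)
  + (if x' \<noteq> x \<and> y' = y
       then \<mu> x x' * (1 - stat_rate S2 \<nu> g y (f x') / max (stat_rate S1 \<mu> f x (f x')) (stat_rate S2 \<nu> g y (f x'))) else 0)
  + (if x' = x \<and> y' \<noteq> y
       then \<nu> y y' * (1 - stat_rate S1 \<mu> f x (g y') / max (stat_rate S1 \<mu> f x (g y')) (stat_rate S2 \<nu> g y (g y'))) else 0)"
  by (simp only: coupled_rate_def fst_conv snd_conv)

lemma coupled_rate_marg_fst:
  assumes fin: "finite S2" and y: "y \<in> S2" and xx: "x' \<noteq> x"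
  shows "(\<Sum>y'\<in>S2. coupled_rate S1 S2 \<mu> \<nu> f g (x, y) (x', y')) = \<mu> x x'"
proof -
  let ?m = "stat_rate S1 \<mu> f x (f x')" and ?n = "stat_rate S2 \<nu> g y (f x')"
  let ?M = "max ?m ?n"
  have joint: "(\<Sum>y'\<in>S2. if x' \<noteq> x \<and> y' \<noteq> y \<and> f x' = g y' then \<mu> x x' * \<nu> y y' / ?M else 0)
      = \<mu> x x' / ?M * ?n"
  proof -
    have "(\<Sum>y'\<in>S2. if x' \<noteq> x \<and> y' \<noteq> y \<and> f x' = g y' then \<mu> x x' * \<nu> y y' / ?M else 0)
        = (\<Sum>y'\<in>S2 - {y}. \<mu> x x' / ?M * (if g y' = f x' then \<nu> y y' else 0))"
    proof -
      have "(\<Sum>y'\<in>S2. if x' \<noteq> x \<and> y' \<noteq> y \<and> f x' = g y' then \<mu> x x' * \<nu> y y' / ?M else 0)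
         = (\<Sum>y'\<in>S2 - {y}. if x' \<noteq> x \<and> y' \<noteq> y \<and> f x' = g y' then \<mu> x x' * \<nu> y y' / ?M else 0)"
        using fin y by (subst sum.remove[of _ y]) auto
      also have "\<dots> = (\<Sum>y'\<in>S2 - {y}. \<mu> x x' / ?M * (if g y' = f x' then \<nu> y y' else 0))"
      proof (rule sum.cong[OF refl])
        fix y' assume "y' \<in> S2 - {y}"
        then show "(if x' \<noteq> x \<and> y' \<noteq> y \<and> f x' = g y' then \<mu> x x' * \<nu> y y' / ?M else 0)
           = \<mu> x x' / ?M * (if g y' = f x' then \<nu> y y' else 0)"
          using xx by (cases "g y' = f x'") auto
      qed
      finally show ?thesis .
    qed
    also have "\<dots> = \<mu> x x' / ?M * ?n" by (simp add: stat_rate_def sum_distrib_left)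
    finally show ?thesis .
  qed
  have alone: "(\<Sum>y'\<in>S2. if x' \<noteq> x \<and> y' = y then \<mu> x x' * (1 - ?n / ?M) else 0) = \<mu> x x' * (1 - ?n / ?M)"
    using fin y xx by (simp add: sum.delta')
  have "(\<Sum>y'\<in>S2. coupled_rate S1 S2 \<mu> \<nu> f g (x, y) (x', y')) =
     (\<Sum>y'\<in>S2. if x' \<noteq> x \<and> y' \<noteq> y \<and> f x' = g y' then \<mu> x x' * \<nu> y y' / ?M else 0)
     + (\<Sum>y'\<in>S2. if x' \<noteq> x \<and> y' = y then \<mu> x x' * (1 - ?n / ?M) else 0)"
    using xx by (simp only: coupled_rate_pair sum.distrib) simp
  also have "\<dots> = \<mu> x x'" unfolding joint alone by (simp add: field_simps)
  finally show ?thesis .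
qed

lemma coupled_rate_marg_snd:
  assumes fin: "finite S1" and x: "x \<in> S1" and yy: "y' \<noteq> y"
  shows "(\<Sum>x'\<in>S1. coupled_rate S1 S2 \<mu> \<nu> f g (x, y) (x', y')) = \<nu> y y'"
proof -
  let ?m = "stat_rate S1 \<mu> f x (g y')" and ?n = "stat_rate S2 \<nu> g y (g y')"
  let ?M = "max ?m ?n"
  have joint: "(\<Sum>x'\<in>S1. if x' \<noteq> x \<and> y' \<noteq> y \<and> f x' = g y' then \<mu> x x' * \<nu> y y' / max (stat_rate S1 \<mu> f x (f x')) (stat_rate S2 \<nu> g y (f x')) else 0)
      = \<nu> y y' / ?M * ?m"
  proof -
    have "(\<Sum>x'\<in>S1. if x' \<noteq> x \<and> y' \<noteq> y \<and> f x' = g y' then \<mu> x x' * \<nu> y y' / max (stat_rate S1 \<mu> f x (f x')) (stat_rate S2 \<nu> g y (f x')) else 0)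
        = (\<Sum>x'\<in>S1 - {x}. \<nu> y y' / ?M * (if f x' = g y' then \<mu> x x' else 0))"
    proof -
      have "(\<Sum>x'\<in>S1. if x' \<noteq> x \<and> y' \<noteq> y \<and> f x' = g y' then \<mu> x x' * \<nu> y y' / max (stat_rate S1 \<mu> f x (f x')) (stat_rate S2 \<nu> g y (f x')) else 0)
         = (\<Sum>x'\<in>S1 - {x}. if x' \<noteq> x \<and> y' \<noteq> y \<and> f x' = g y' then \<mu> x x' * \<nu> y y' / max (stat_rate S1 \<mu> f x (f x')) (stat_rate S2 \<nu> g y (f x')) else 0)"
        using fin x by (subst sum.remove[of _ x]) auto
      also have "\<dots> = (\<Sum>x'\<in>S1 - {x}. \<nu> y y' / ?M * (if f x' = g y' then \<mu> x x' else 0))"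
      proof (rule sum.cong[OF refl])
        fix x' assume "x' \<in> S1 - {x}"
        then show "(if x' \<noteq> x \<and> y' \<noteq> y \<and> f x' = g y' then \<mu> x x' * \<nu> y y' / max (stat_rate S1 \<mu> f x (f x')) (stat_rate S2 \<nu> g y (f x')) else 0)
           = \<nu> y y' / ?M * (if f x' = g y' then \<mu> x x' else 0)"
          using yy by (cases "f x' = g y'") auto
      qed
      finally show ?thesis .
    qed
    also have "\<dots> = \<nu> y y' / ?M * ?m" by (simp add: stat_rate_def sum_distrib_left)
    finally show ?thesis .
  qed
  have alone: "(\<Sum>x'\<in>S1. if x' = x \<and> y' \<noteq> y then \<nu> y y' * (1 - ?m / ?M) else 0) = \<nu> y y' * (1 - ?m / ?M)"
    using fin x yy by (simp add: sum.delta')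
  have "(\<Sum>x'\<in>S1. coupled_rate S1 S2 \<mu> \<nu> f g (x, y) (x', y')) =
     (\<Sum>x'\<in>S1. if x' \<noteq> x \<and> y' \<noteq> y \<and> f x' = g y' then \<mu> x x' * \<nu> y y' / max (stat_rate S1 \<mu> f x (f x')) (stat_rate S2 \<nu> g y (f x')) else 0)
     + (\<Sum>x'\<in>S1. if x' = x \<and> y' \<noteq> y then \<nu> y y' * (1 - ?m / ?M) else 0)"
    using yy by (simp only: coupled_rate_pair sum.distrib) simp
  also have "\<dots> = \<nu> y y'" unfolding joint alone by (simp add: field_simps)
  finally show ?thesis .
qed

lemma stat_rate_nonneg: "(\<forall>a b. \<mu> a b \<ge> 0) \<Longrightarrow> stat_rate S \<mu> f x k \<ge> 0"
  unfolding stat_rate_def by (intro sum_nonneg) auto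

lemma div_max_le_one: assumes "(n::real) \<ge> 0" "m \<ge> 0" shows "n / max m n \<le> 1"
  proof (cases "max m n = 0")
  case True then show ?thesis by simp
next
  case False then have "max m n > 0" using assms by (auto simp: max_def)
  then show ?thesis by (simp add: divide_le_eq_1)
qed

lemma coupled_rate_nonneg:
  assumes "\<forall>a b. \<mu> a b \<ge> 0" "\<forall>a b. \<nu> a b \<ge> 0"
  shows "coupled_rate S1 S2 \<mu> \<nu> f g z z' \<ge> 0"
proof -
  have m: "\<And>x k. stat_rate S1 \<mu> f x k \<ge> 0" and n: "\<And>y k. stat_rate S2 \<nu> g y k \<ge> 0"
    using assms by (simp_all add: stat_rate_nonneg)
  show ?thesis unfolding coupled_rate_def
  proof (intro add_nonneg_nonneg)
    have M: "\<And>x y a b. 0 \<le> max (stat_rate S1 \<mu> f x a) (stat_rate S2 \<nu> g y b)" using m by (meson le_max_iff_disj)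
    show "0 \<le> (if fst z' \<noteq> fst z \<and> snd z' \<noteq> snd z \<and> f (fst z') = g (snd z')
       then \<mu> (fst z) (fst z') * \<nu> (snd z) (snd z')
         / max (stat_rate S1 \<mu> f (fst z) (f (fst z'))) (stat_rate S2 \<nu> g (snd z) (f (fst z'))) else 0)"
      using assms M by (simp add: divide_nonneg_nonneg)
    have a: "stat_rate S2 \<nu> g (snd z) (f (fst z')) / max (stat_rate S1 \<mu> f (fst z) (f (fst z'))) (stat_rate S2 \<nu> g (snd z) (f (fst z'))) \<le> 1"
      by (rule div_max_le_one[OF n m])
    show "0 \<le> (if fst z' \<noteq> fst z \<and> snd z' = snd z
       then \<mu> (fst z) (fst z') * (1 - stat_rate S2 \<nu> g (snd z) (f (fst z'))
         / max (stat_rate S1 \<mu> f (fst z) (f (fst z'))) (stat_rate S2 \<nu> g (snd z) (f (fst z')))) else 0)"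
      using assms a by simp
    have b: "stat_rate S1 \<mu> f (fst z) (g (snd z')) / max (stat_rate S1 \<mu> f (fst z) (g (snd z'))) (stat_rate S2 \<nu> g (snd z) (g (snd z'))) \<le> 1"
      using div_max_le_one[OF m n] by (simp add: max.commute)
    show "0 \<le> (if fst z' = fst z \<and> snd z' \<noteq> snd z
       then \<nu> (snd z) (snd z') * (1 - stat_rate S1 \<mu> f (fst z) (g (snd z'))
         / max (stat_rate S1 \<mu> f (fst z) (g (snd z'))) (stat_rate S2 \<nu> g (snd z) (g (snd z')))) else 0)"
      using assms b by simp
  qed
qed

text \<open>The unmatched masses of the maximal coupling add up to the difference of the two
  total rates.\<close>
lemma max_coupling_identity:
  assumes "(m::real) \<ge> 0" "n \<ge> 0"
  shows "m * (1 - n / max m n) + n * (1 - m / max m n) = \<bar>m - n\<bar>"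
proof (cases "m \<le> n")
  case True
  show ?thesis
  proof (cases "n = 0")
    case True then show ?thesis using \<open>m \<le> n\<close> assms by simp
  next
    case False then show ?thesis using \<open>m \<le> n\<close> assms by (simp add: max_def field_simps)
  qed
next
  case False
  then have "m > 0" using assms by simp
  then show ?thesis using False assms by (simp add: max_def field_simps)
qed

lemma unmatched_mass:
  assumes fin1: "finite S1" and fin2: "finite S2" and x: "x \<in> S1" and y: "y \<in> S2"
  shows "(\<Sum>z'\<in>S1 \<times> S2. (if fst z' \<noteq> x \<and> snd z' = y \<and> f (fst z') = k then \<mu> x (fst z') * \<alpha> else 0)
            + (if fst z' = x \<and> snd z' \<noteq> y \<and> g (snd z') = k then \<nu> y (snd z') * \<beta> else 0))
         = \<alpha> * stat_rate S1 \<mu> f x k + \<beta> * stat_rate S2 \<nu> g y k"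
proof -
  have first: "(\<Sum>x'\<in>S1. if x' \<noteq> x \<and> f x' = k then \<mu> x x' * \<alpha> else 0) = \<alpha> * stat_rate S1 \<mu> f x k"
  proof -
    have "(\<Sum>x'\<in>S1. if x' \<noteq> x \<and> f x' = k then \<mu> x x' * \<alpha> else 0)
        = (\<Sum>x'\<in>S1 - {x}. \<alpha> * (if f x' = k then \<mu> x x' else 0))"
      using fin1 x by (subst sum.remove[of _ x]) (auto intro!: sum.cong split: if_split_asm)
    then show ?thesis by (simp add: stat_rate_def sum_distrib_left)
  qed
  have second: "(\<Sum>y'\<in>S2. if x' = x \<and> y' \<noteq> y \<and> g y' = k then \<nu> y y' * \<beta> else 0)
      = (if x' = x then \<beta> * stat_rate S2 \<nu> g y k else 0)" for x'
  proof (cases "x' = x")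
    case True
    have "(\<Sum>y'\<in>S2. if x' = x \<and> y' \<noteq> y \<and> g y' = k then \<nu> y y' * \<beta> else 0)
        = (\<Sum>y'\<in>S2 - {y}. \<beta> * (if g y' = k then \<nu> y y' else 0))"
      using fin2 y True by (subst sum.remove[of _ y]) (auto intro!: sum.cong split: if_split_asm)
    then show ?thesis using True by (simp add: stat_rate_def sum_distrib_left)
  qed simp
  define mass where "mass = (\<lambda>z'. (if fst z' \<noteq> x \<and> snd z' = y \<and> f (fst z') = k then \<mu> x (fst z') * \<alpha> else 0)
            + (if fst z' = x \<and> snd z' \<noteq> y \<and> g (snd z') = k then \<nu> y (snd z') * \<beta> else 0))"
  have "(\<Sum>z'\<in>S1 \<times> S2. mass z') = (\<Sum>x'\<in>S1. \<Sum>y'\<in>S2. mass (x', y'))"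
    by (simp add: sum.cartesian_product)
  also have "\<dots> = (\<Sum>x'\<in>S1. (if x' \<noteq> x \<and> f x' = k then \<mu> x x' * \<alpha> else 0)
                   + (if x' = x then \<beta> * stat_rate S2 \<nu> g y k else 0))"
  proof (rule sum.cong[OF refl])
    fix x' assume "x' \<in> S1"
    have "(\<Sum>y'\<in>S2. if x' \<noteq> x \<and> y' = y \<and> f x' = k then \<mu> x x' * \<alpha> else 0)
        = (if x' \<noteq> x \<and> f x' = k then \<mu> x x' * \<alpha> else 0)"
      using fin2 y by (cases "x' \<noteq> x \<and> f x' = k") (auto simp: sum.delta')
    then show "(\<Sum>y'\<in>S2. mass (x', y'))
        = (if x' \<noteq> x \<and> f x' = k then \<mu> x x' * \<alpha> else 0)
          + (if x' = x then \<beta> * stat_rate S2 \<nu> g y k else 0)"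
      unfolding mass_def fst_conv snd_conv sum.distrib second by simp
  qed
  also have "\<dots> = \<alpha> * stat_rate S1 \<mu> f x k + \<beta> * stat_rate S2 \<nu> g y k"
    using fin1 x first by (simp add: sum.distrib sum.delta')
  finally show ?thesis unfolding mass_def .
qed

lemma coupled_rate_leave:
  assumes fin1: "finite S1" and fin2: "finite S2" and x: "x \<in> S1" and y: "y \<in> S2"
    and \<mu>0: "\<forall>a b. \<mu> a b \<ge> 0" and \<nu>0: "\<forall>a b. \<nu> a b \<ge> 0"
    and C1: "\<forall>x'\<in>S1. \<forall>y'\<in>S2. x' \<noteq> x \<longrightarrow> y' \<noteq> y \<longrightarrow> \<mu> x x' > 0 \<longrightarrow> \<nu> y y' > 0 \<longrightarrow> f x' = g y' \<longrightarrow> (x', y') \<in> A"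
    and C2: "\<forall>x'\<in>S1. x' \<noteq> x \<longrightarrow> \<mu> x x' > 0 \<longrightarrow> (x', y) \<notin> A \<longrightarrow> f x' = k1"
    and C3: "\<forall>y'\<in>S2. y' \<noteq> y \<longrightarrow> \<nu> y y' > 0 \<longrightarrow> (x, y') \<notin> A \<longrightarrow> g y' = k1"
  shows "(\<Sum>z'\<in>S1 \<times> S2 - A. coupled_rate S1 S2 \<mu> \<nu> f g (x, y) z') \<le> \<bar>stat_rate S1 \<mu> f x k1 - stat_rate S2 \<nu> g y k1\<bar>"
proof -
  define m where "m = stat_rate S1 \<mu> f x k1"
  define n where "n = stat_rate S2 \<nu> g y k1"
  have m0: "m \<ge> 0" unfolding m_def using \<mu>0 by (rule stat_rate_nonneg)
  have n0: "n \<ge> 0" unfolding n_def using \<nu>0 by (rule stat_rate_nonneg)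
  define \<alpha> where "\<alpha> = 1 - n / max m n"
  define \<beta> where "\<beta> = 1 - m / max m n"
  have \<alpha>0: "\<alpha> \<ge> 0" unfolding \<alpha>_def using div_max_le_one[OF n0 m0] by simp
  have \<beta>0: "\<beta> \<ge> 0" unfolding \<beta>_def using div_max_le_one[OF m0 n0] by (simp add: max.commute)
  define bd where "bd = (\<lambda>z'. (if fst z' \<noteq> x \<and> snd z' = y \<and> f (fst z') = k1 then \<mu> x (fst z') * \<alpha> else 0)
      + (if fst z' = x \<and> snd z' \<noteq> y \<and> g (snd z') = k1 then \<nu> y (snd z') * \<beta> else 0))"
  have bd0: "bd z' \<ge> 0" for z' unfolding bd_def using \<mu>0 \<nu>0 \<alpha>0 \<beta>0 by auto
  \<comment> \<open>Out of A, only the unmatched moves towards k1 carry rate.\<close>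
  have pt: "coupled_rate S1 S2 \<mu> \<nu> f g (x, y) z' \<le> bd z'" if z': "z' \<in> S1 \<times> S2 - A" for z'
  proof -
    obtain x' y' where zz: "z' = (x', y')" by (cases z')
    have x': "x' \<in> S1" and y': "y' \<in> S2" and nA: "(x', y') \<notin> A" using z' zz by auto
    have pos: "\<mu> x x' = 0 \<or> \<mu> x x' > 0" "\<nu> y y' = 0 \<or> \<nu> y y' > 0"
      using \<mu>0 \<nu>0 by (auto simp: order_le_less)
    have joint: "(if x' \<noteq> x \<and> y' \<noteq> y \<and> f x' = g y'
       then \<mu> x x' * \<nu> y y' / max (stat_rate S1 \<mu> f x (f x')) (stat_rate S2 \<nu> g y (f x')) else 0) = 0"
      using C1 x' y' nA pos by auto
    have alone1: "(if x' \<noteq> x \<and> y' = y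
       then \<mu> x x' * (1 - stat_rate S2 \<nu> g y (f x') / max (stat_rate S1 \<mu> f x (f x')) (stat_rate S2 \<nu> g y (f x'))) else 0)
       = (if x' \<noteq> x \<and> y' = y \<and> f x' = k1 then \<mu> x x' * \<alpha> else 0)"
      using C2 x' nA pos by (auto simp: \<alpha>_def m_def n_def)
    have alone2: "(if x' = x \<and> y' \<noteq> y
       then \<nu> y y' * (1 - stat_rate S1 \<mu> f x (g y') / max (stat_rate S1 \<mu> f x (g y')) (stat_rate S2 \<nu> g y (g y'))) else 0)
       = (if x' = x \<and> y' \<noteq> y \<and> g y' = k1 then \<nu> y y' * \<beta> else 0)"
      using C3 y' nA pos by (auto simp: \<beta>_def m_def n_def)
    show ?thesis unfolding zz coupled_rate_pair joint alone1 alone2 bd_def by simp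
  qed
  have "(\<Sum>z'\<in>S1 \<times> S2 - A. coupled_rate S1 S2 \<mu> \<nu> f g (x, y) z') \<le> (\<Sum>z'\<in>S1 \<times> S2 - A. bd z')"
    by (rule sum_mono) (rule pt)
  also have "\<dots> \<le> (\<Sum>z'\<in>S1 \<times> S2. bd z')"
    by (rule sum_mono2) (use fin1 fin2 bd0 in auto)
  also have "\<dots> = \<alpha> * m + \<beta> * n"
    unfolding bd_def m_def n_def by (rule unmatched_mass[OF fin1 fin2 x y])
  also have "\<dots> = \<bar>m - n\<bar>"
    unfolding \<alpha>_def \<beta>_def using max_coupling_identity[OF m0 n0] by (simp add: mult.commute)
  finally show ?thesis by (simp add: m_def n_def)
qed

lemma stat_rate_eq:
  assumes "finite S" "x \<in> S" "f x \<noteq> k"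
  shows "stat_rate S \<mu> f x k = (\<Sum>a\<in>{a\<in>S. f a = k}. \<mu> x a)"
proof -
  have "stat_rate S \<mu> f x k = (\<Sum>a\<in>S. if f a = k then \<mu> x a else 0)"
    unfolding stat_rate_def using assms by (subst (2) sum.remove[of _ x]) auto
  also have "\<dots> = (\<Sum>a\<in>{a\<in>S. f a = k}. \<mu> x a)" using assms by (simp add: sum.inter_filter)
  finally show ?thesis .
qed

lemma stat_rate_zero: "\<forall>a\<in>S. f a \<noteq> k \<Longrightarrow> stat_rate S \<mu> f x k = 0"
  unfolding stat_rate_def by (rule sum.neutral) auto

section \<open>Words, trees and edges\<close>

lemma prefix_take_len: "prefix x w \<Longrightarrow> x = take (length x) w"
  unfolding prefix_def by auto

lemma prefix_len: "prefix x w \<Longrightarrow> length x \<le> length w"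
  unfolding prefix_def by auto

lemma prefix_eq_len: "prefix x w \<Longrightarrow> prefix y w \<Longrightarrow> length x = length y \<Longrightarrow> x = y"
  by (metis prefix_take_len)

lemma take_prefix_take: "i \<le> j \<Longrightarrow> prefix (take i w) (take j w)"
  by (metis min.absorb1 take_is_prefix take_take)

lemma take_inj: "i \<le> length w \<Longrightarrow> j \<le> length w \<Longrightarrow> take i w = take j w \<Longrightarrow> i = j"
  by (metis length_take min.absorb2)

lemma tv_prefix: "u \<in> tree_vertices b h \<Longrightarrow> prefix x u \<Longrightarrow> x \<in> tree_vertices b h"
  unfolding tree_vertices_def using prefix_len set_mono_prefix by fastforce

lemma finite_tv: "finite (tree_vertices b h)"
proof -
  have "tree_vertices b h = {xs. set xs \<subseteq> {..<b} \<and> length xs \<le> h}" by (auto simp: tree_vertices_def)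
  then show ?thesis by (simp add: finite_lists_length_le)
qed

lemma card_level: "l \<le> h \<Longrightarrow> card (level b h l) = b ^ l"
proof -
  assume "l \<le> h"
  then have "level b h l = {xs. set xs \<subseteq> {..<b} \<and> length xs = l}"
    by (auto simp: level_def tree_vertices_def)
  then show ?thesis by (simp add: card_lists_length_eq)
qed

lemma edges_sub: "edges V \<subseteq> V \<times> V" by (auto simp: edges_def)

lemma finite_edges: "finite V \<Longrightarrow> finite (edges V)"
  using edges_sub finite_subset by (metis finite_SigmaI)

lemma edgesE: "e \<in> edges V \<Longrightarrow> (\<And>a i. e = (a, a @ [i]) \<Longrightarrow> a \<in> V \<Longrightarrow> a @ [i] \<in> V \<Longrightarrow> P) \<Longrightarrow> P"
  unfolding edges_def by blast

lemma edges_mem: "(a, a @ [i]) \<in> edges V \<longleftrightarrow> a \<in> V \<and> a @ [i] \<in> V"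
  unfolding edges_def by blast

section \<open>Spin configurations and heat-bath updates\<close>

definition block_confs :: "nat list set \<Rightarrow> nat list set \<Rightarrow> (nat list \<Rightarrow> real) \<Rightarrow> (nat list \<Rightarrow> real) set" where
  "block_confs V B \<sigma> = {\<eta> \<in> confs V. \<forall>u\<in>V - B. \<eta> u = \<sigma> u}"

lemma confs_val: "\<eta> \<in> confs V \<Longrightarrow> \<eta> u = 1 \<or> \<eta> u = -1"
  unfolding confs_def by (cases "u \<in> V") auto

lemma confs_sq: "\<eta> \<in> confs V \<Longrightarrow> \<eta> u * \<eta> u = 1"
  using confs_val[of \<eta> V u] by auto

lemma finite_confs:
  assumes "finite V" shows "finite (confs V)"
proof -
  have "confs V \<subseteq> {f. \<forall>x. (x \<in> V \<longrightarrow> f x \<in> {1, -1::real}) \<and> (x \<notin> V \<longrightarrow> f x = 1)}"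
    by (auto simp: confs_def)
  moreover have "finite {f. \<forall>x. (x \<in> V \<longrightarrow> f x \<in> {1, -1::real}) \<and> (x \<notin> V \<longrightarrow> f x = 1)}"
    using assms by (intro finite_set_of_finite_funs) auto
  ultimately show ?thesis using finite_subset by blast
qed

lemma finite_block_confs: "finite V \<Longrightarrow> finite (block_confs V B \<sigma>)"
  unfolding block_confs_def using finite_confs by auto

lemma block_confs_sub: "block_confs V B \<sigma> \<subseteq> confs V" by (auto simp: block_confs_def)

lemma gibbs_weight_pos: "gibbs_weight \<beta> V \<eta> > 0" by (simp add: gibbs_weight_def)

lemma ising_nonneg: "ising \<beta> V \<sigma> \<ge> 0"
proof -
  have "\<And>\<eta>. gibbs_weight \<beta> V \<eta> \<ge> 0" using gibbs_weight_pos less_imp_le by blast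
  then have "(\<Sum>\<eta>\<in>confs V. gibbs_weight \<beta> V \<eta>) \<ge> 0" by (simp add: sum_nonneg)
  then show ?thesis unfolding ising_def using \<open>\<And>\<eta>. gibbs_weight \<beta> V \<eta> \<ge> 0\<close> by simp
qed

lemma block_kernel_nonneg: "block_kernel \<beta> V B \<sigma> \<sigma>' \<ge> 0"
  unfolding block_kernel_def using ising_nonneg by (auto intro!: divide_nonneg_nonneg sum_nonneg)

lemma block_kernel_support: "block_kernel \<beta> V B \<sigma> \<sigma>' \<noteq> 0 \<Longrightarrow> \<sigma>' \<in> block_confs V B \<sigma>"
  unfolding block_kernel_def block_confs_def by (auto split: if_splits)

text \<open>Spin flip on a set D of vertices.  Summing against flips is the basic tool of
  the high-temperature expansion: odd terms cancel.\<close>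
definition flip :: "nat list set \<Rightarrow> (nat list \<Rightarrow> real) \<Rightarrow> (nat list \<Rightarrow> real)" where
  "flip D \<eta> = (\<lambda>u. if u \<in> D then - \<eta> u else \<eta> u)"

lemma flip_app: "flip D \<eta> u = (if u \<in> D then - \<eta> u else \<eta> u)"
  by (simp add: flip_def)

lemma flip_flip[simp]: "flip D (flip D \<eta>) = \<eta>"
  by (auto simp: flip_def)

lemma flip_block_confs:
  assumes "D \<subseteq> B" "D \<subseteq> V" "\<eta> \<in> block_confs V B \<sigma>"
  shows "flip D \<eta> \<in> block_confs V B \<sigma>"
  using assms unfolding block_confs_def confs_def flip_def by auto

lemma sum_flip_zero:
  fixes F :: "(nat list \<Rightarrow> real) \<Rightarrow> real"
  assumes fin: "finite V" and D: "D \<subseteq> B" "D \<subseteq> V"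
    and odd: "\<And>\<eta>. \<eta> \<in> block_confs V B \<sigma> \<Longrightarrow> F (flip D \<eta>) = - F \<eta>"
  shows "(\<Sum>\<eta>\<in>block_confs V B \<sigma>. F \<eta>) = 0"
proof -
  have "(\<Sum>\<eta>\<in>block_confs V B \<sigma>. F \<eta>) = (\<Sum>\<eta>\<in>block_confs V B \<sigma>. F (flip D \<eta>))"
    by (rule sum.reindex_bij_witness[where i = "flip D" and j = "flip D"])
       (auto intro: flip_block_confs[OF D])
  also have "\<dots> = (\<Sum>\<eta>\<in>block_confs V B \<sigma>. - F \<eta>)" by (rule sum.cong) (auto simp: odd)
  also have "\<dots> = - (\<Sum>\<eta>\<in>block_confs V B \<sigma>. F \<eta>)" by (simp add: sum_negf)
  finally show ?thesis by simp
qed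

lemma card_pinned_pos:
  assumes fin: "finite V" and \<sigma>: "\<sigma> \<in> confs V" and wB: "w \<in> B" and wV: "w \<in> V" and s: "s = 1 \<or> s = -1"
  shows "card {\<eta>\<in>block_confs V B \<sigma>. \<eta> w = s} > 0"
proof -
  have "\<sigma>(w := s) \<in> {\<eta>\<in>block_confs V B \<sigma>. \<eta> w = s}"
    using \<sigma> wB wV s by (auto simp: block_confs_def confs_def)
  moreover have "finite {\<eta>\<in>block_confs V B \<sigma>. \<eta> w = s}" using finite_block_confs[OF fin] by simp
  ultimately show ?thesis by (auto simp: card_gt_0_iff)
qed

lemma card_pinned_sym:
  assumes wB: "w \<in> B" and wV: "w \<in> V"
  shows "card {\<eta>\<in>block_confs V B \<sigma>. \<eta> w = 1} = card {\<eta>\<in>block_confs V B \<sigma>. \<eta> w = -1}"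
proof (rule bij_betw_same_card[of "flip {w}"])
  have D: "{w} \<subseteq> B" "{w} \<subseteq> V" using wB wV by auto
  show "bij_betw (flip {w}) {\<eta>\<in>block_confs V B \<sigma>. \<eta> w = 1} {\<eta>\<in>block_confs V B \<sigma>. \<eta> w = -1}"
  proof (rule bij_betw_byWitness[where f' = "flip {w}"])
    show "\<forall>a\<in>{\<eta>\<in>block_confs V B \<sigma>. \<eta> w = 1}. flip {w} (flip {w} a) = a" by simp
    show "\<forall>a\<in>{\<eta>\<in>block_confs V B \<sigma>. \<eta> w = -1}. flip {w} (flip {w} a) = a" by simp
    show "flip {w} ` {\<eta>\<in>block_confs V B \<sigma>. \<eta> w = 1} \<subseteq> {\<eta>\<in>block_confs V B \<sigma>. \<eta> w = -1}"
      using flip_block_confs[OF D] by (auto simp: flip_app)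
    show "flip {w} ` {\<eta>\<in>block_confs V B \<sigma>. \<eta> w = -1} \<subseteq> {\<eta>\<in>block_confs V B \<sigma>. \<eta> w = 1}"
      using flip_block_confs[OF D] by (auto simp: flip_app)
  qed
qed

section \<open>The high-temperature expansion\<close>

definition ht_weight :: "real \<Rightarrow> (nat list \<times> nat list) set \<Rightarrow> (nat list \<Rightarrow> real) \<Rightarrow> real" where
  "ht_weight \<theta> E \<eta> = (\<Prod>e\<in>E. 1 + \<theta> * \<eta> (fst e) * \<eta> (snd e))"

lemma exp_pm:
  fixes \<beta> t :: real
  assumes "t = 1 \<or> t = -1"
  shows "exp (\<beta> * t) = cosh \<beta> * (1 + tanh \<beta> * t)"
proof -
  have c: "cosh \<beta> \<noteq> 0" using cosh_real_pos[of \<beta>] by linarith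
  have "cosh \<beta> * (1 + tanh \<beta> * t) = cosh \<beta> + sinh \<beta> * t" using c by (simp add: tanh_def field_simps)
  then show ?thesis using assms cosh_plus_sinh[of \<beta>] cosh_minus_sinh[of \<beta>] by auto
qed

lemma gibbs_weight_ht:
  assumes fin: "finite V" and \<eta>: "\<eta> \<in> confs V"
  shows "gibbs_weight \<beta> V \<eta> = cosh \<beta> ^ card (edges V) * ht_weight (tanh \<beta>) (edges V) \<eta>"
proof -
  have "gibbs_weight \<beta> V \<eta> = exp (\<Sum>e\<in>edges V. \<beta> * (\<eta> (fst e) * \<eta> (snd e)))"
    by (simp add: gibbs_weight_def sum_distrib_left)
  also have "\<dots> = (\<Prod>e\<in>edges V. exp (\<beta> * (\<eta> (fst e) * \<eta> (snd e))))"
    using finite_edges[OF fin] by (rule exp_sum)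
  also have "\<dots> = (\<Prod>e\<in>edges V. cosh \<beta> * (1 + tanh \<beta> * \<eta> (fst e) * \<eta> (snd e)))"
  proof (rule prod.cong[OF refl])
    fix e assume "e \<in> edges V"
    have "\<eta> (fst e) * \<eta> (snd e) = 1 \<or> \<eta> (fst e) * \<eta> (snd e) = -1"
      using confs_val[OF \<eta>, of "fst e"] confs_val[OF \<eta>, of "snd e"] by auto
    then show "exp (\<beta> * (\<eta> (fst e) * \<eta> (snd e))) = cosh \<beta> * (1 + tanh \<beta> * \<eta> (fst e) * \<eta> (snd e))"
      using exp_pm by (simp add: mult.assoc)
  qed
  also have "\<dots> = cosh \<beta> ^ card (edges V) * ht_weight (tanh \<beta>) (edges V) \<eta>"
    by (simp add: ht_weight_def prod.distrib)
  finally show ?thesis .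
qed

lemma block_kernel_marginal:
  assumes fin: "finite V" and \<sigma>: "\<sigma> \<in> confs V"
  shows "(\<Sum>\<eta>\<in>{\<eta>\<in>confs V. \<eta> w = s}. block_kernel \<beta> V B \<sigma> \<eta>)
     = (\<Sum>\<eta>\<in>{\<eta>\<in>block_confs V B \<sigma>. \<eta> w = s}. ht_weight (tanh \<beta>) (edges V) \<eta>) / (\<Sum>\<eta>\<in>block_confs V B \<sigma>. ht_weight (tanh \<beta>) (edges V) \<eta>)"
proof -
  let ?E = "edges V" and ?\<theta> = "tanh \<beta>"
  define Z where "Z = (\<Sum>\<eta>\<in>confs V. gibbs_weight \<beta> V \<eta>)"
  define K where "K = cosh \<beta> ^ card ?E"
  have K0: "K > 0" by (simp add: K_def)
  have Z0: "Z > 0" unfolding Z_def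
    using finite_confs[OF fin] \<sigma> gibbs_weight_pos by (intro sum_pos) auto
  have isg: "ising \<beta> V \<eta> = K * ht_weight ?\<theta> ?E \<eta> / Z" if "\<eta> \<in> confs V" for \<eta>
    using that gibbs_weight_ht[OF fin that] by (simp add: ising_def Z_def K_def)
  have cs: "{\<eta> \<in> confs V. \<forall>u\<in>V - B. \<eta> u = \<sigma> u} = block_confs V B \<sigma>" by (simp add: block_confs_def)
  define S where "S = (\<Sum>\<eta>\<in>block_confs V B \<sigma>. ht_weight ?\<theta> ?E \<eta>)"
  have den: "(\<Sum>\<eta>\<in>block_confs V B \<sigma>. ising \<beta> V \<eta>) = K * S / Z"
    unfolding S_def sum_distrib_left sum_divide_distrib
    by (rule sum.cong[OF refl]) (use isg block_confs_sub in blast)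
  have bk: "block_kernel \<beta> V B \<sigma> \<eta> = (if \<eta> \<in> block_confs V B \<sigma> then ht_weight ?\<theta> ?E \<eta> / S else 0)" for \<eta>
  proof (cases "\<eta> \<in> block_confs V B \<sigma>")
    case True
    then have "\<eta> \<in> confs V" using block_confs_sub by blast
    then show ?thesis using True K0 Z0 unfolding block_kernel_def cs den
      by (simp add: isg block_confs_def)
  next
    case False then show ?thesis unfolding block_kernel_def by (auto simp add: block_confs_def)
  qed
  have "(\<Sum>\<eta>\<in>{\<eta>\<in>confs V. \<eta> w = s}. block_kernel \<beta> V B \<sigma> \<eta>)
      = (\<Sum>\<eta>\<in>{\<eta>\<in>confs V. \<eta> w = s}. if \<eta> \<in> block_confs V B \<sigma> then ht_weight ?\<theta> ?E \<eta> / S else 0)"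
    by (simp add: bk)
  also have "\<dots> = (\<Sum>\<eta>\<in>{\<eta>\<in>confs V. \<eta> w = s} \<inter> block_confs V B \<sigma>. ht_weight ?\<theta> ?E \<eta> / S)"
    using finite_confs[OF fin] by (simp add: sum.inter_restrict)
  also have "{\<eta>\<in>confs V. \<eta> w = s} \<inter> block_confs V B \<sigma> = {\<eta>\<in>block_confs V B \<sigma>. \<eta> w = s}"
    using block_confs_sub by blast
  finally show ?thesis by (simp add: S_def sum_divide_distrib)
qed

lemma block_kernel_marginal_ratio:
  assumes fin: "finite V" and \<sigma>: "\<sigma> \<in> confs V"
    and Zd: "\<And>t. Z t = (\<Sum>\<eta>\<in>block_confs V B \<sigma>. (if \<eta> w = t then 1 else 0) * ht_weight (tanh \<beta>) (edges V) \<eta>)"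
  shows "(\<Sum>\<eta>\<in>{\<eta>\<in>confs V. \<eta> w = s'}. block_kernel \<beta> V B \<sigma> \<eta>) = Z s' / (Z 1 + Z (-1))"
proof -
  let ?\<theta> = "tanh \<beta>"
  have num: "(\<Sum>\<eta>\<in>{\<eta>\<in>block_confs V B \<sigma>. \<eta> w = t}. ht_weight ?\<theta> (edges V) \<eta>) = Z t" for t
  proof -
    have "(\<Sum>\<eta>\<in>block_confs V B \<sigma>. (if \<eta> w = t then 1 else 0) * ht_weight ?\<theta> (edges V) \<eta>)
        = (\<Sum>\<eta>\<in>block_confs V B \<sigma>. if \<eta> w = t then ht_weight ?\<theta> (edges V) \<eta> else 0)" by (rule sum.cong) auto
    also have "\<dots> = (\<Sum>\<eta>\<in>{\<eta>\<in>block_confs V B \<sigma>. \<eta> w = t}. ht_weight ?\<theta> (edges V) \<eta>)"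
      using finite_block_confs[OF fin] by (simp add: sum.inter_filter)
    finally show ?thesis using Zd by simp
  qed
  have den: "(\<Sum>\<eta>\<in>block_confs V B \<sigma>. ht_weight ?\<theta> (edges V) \<eta>) = Z 1 + Z (-1)"
  proof -
    have "(\<Sum>\<eta>\<in>block_confs V B \<sigma>. ht_weight ?\<theta> (edges V) \<eta>)
        = (\<Sum>\<eta>\<in>block_confs V B \<sigma>. (if \<eta> w = 1 then 1 else 0) * ht_weight ?\<theta> (edges V) \<eta> + (if \<eta> w = -1 then 1 else 0) * ht_weight ?\<theta> (edges V) \<eta>)"
    proof (rule sum.cong[OF refl])
      fix \<eta> assume "\<eta> \<in> block_confs V B \<sigma>"
      then have "\<eta> w = 1 \<or> \<eta> w = -1" using block_confs_sub confs_val by blast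
      then show "ht_weight ?\<theta> (edges V) \<eta> = (if \<eta> w = 1 then 1 else 0) * ht_weight ?\<theta> (edges V) \<eta> + (if \<eta> w = -1 then 1 else 0) * ht_weight ?\<theta> (edges V) \<eta>"
        by auto
    qed
    then show ?thesis using Zd by (simp add: sum.distrib)
  qed
  show ?thesis using block_kernel_marginal[OF fin \<sigma>, where w=w and s=s' and \<beta>=\<beta> and B=B] num den by simp
qed

lemma ht_weight_pos:
  assumes "\<forall>u. \<sigma> u = 1 \<or> \<sigma> u = -1" and "\<bar>\<theta>\<bar> < 1"
  shows "ht_weight \<theta> E \<sigma> > 0"
  unfolding ht_weight_def
proof (rule prod_pos)
  fix e assume "e \<in> E"
  have "\<sigma> (fst e) * \<sigma> (snd e) = 1 \<or> \<sigma> (fst e) * \<sigma> (snd e) = -1" using assms(1)[rule_format, of "fst e"] assms(1)[rule_format, of "snd e"] by auto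
  then show "0 < 1 + \<theta> * \<sigma> (fst e) * \<sigma> (snd e)" using assms(2) by (auto simp: mult.assoc)
qed

lemma ht_weight_remove: "finite E \<Longrightarrow> e0 \<in> E \<Longrightarrow>
   ht_weight \<theta> E \<eta> = (1 + \<theta> * \<eta> (fst e0) * \<eta> (snd e0)) * ht_weight \<theta> (E - {e0}) \<eta>"
  unfolding ht_weight_def by (rule prod.remove)

lemma split_w:
  assumes "finite E"
  shows "ht_weight \<theta> E (\<sigma>(w := s)) = ht_weight \<theta> {e\<in>E. fst e = w \<or> snd e = w} (\<sigma>(w := s)) * ht_weight \<theta> {e\<in>E. \<not> (fst e = w \<or> snd e = w)} \<sigma>"
proof -
  have "ht_weight \<theta> E (\<sigma>(w := s)) = ht_weight \<theta> {e\<in>E. fst e = w \<or> snd e = w} (\<sigma>(w := s)) * ht_weight \<theta> {e\<in>E. \<not> (fst e = w \<or> snd e = w)} (\<sigma>(w := s))"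
  proof -
    have "E = {e\<in>E. fst e = w \<or> snd e = w} \<union> {e\<in>E. \<not> (fst e = w \<or> snd e = w)}" by auto
    then show ?thesis unfolding ht_weight_def using assms
      by (metis (no_types, lifting) prod.union_disjoint finite_Un disjoint_iff mem_Collect_eq)
  qed
  moreover have "ht_weight \<theta> {e\<in>E. \<not> (fst e = w \<or> snd e = w)} (\<sigma>(w := s)) = ht_weight \<theta> {e\<in>E. \<not> (fst e = w \<or> snd e = w)} \<sigma>"
    unfolding ht_weight_def by (rule prod.cong) auto
  ultimately show ?thesis by simp
qed

lemma ht_weight_flip_inv:
  assumes "\<forall>e\<in>E. fst e \<in> D \<longleftrightarrow> snd e \<in> D"
  shows "ht_weight \<theta> E (flip D \<eta>) = ht_weight \<theta> E \<eta>"
  unfolding ht_weight_def flip_def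
  by (rule prod.cong[OF refl]) (use assms in auto)

text \<open>Cutting an edge: if flipping D changes only the factor of the edge ed, that
  factor averages to 1 and can be dropped.\<close>
lemma cut_edge:
  assumes fin: "finite V" and finE: "finite E" and D: "D \<subseteq> B" "D \<subseteq> V"
    and ed: "ed \<in> E" and cross: "(fst ed \<in> D) \<noteq> (snd ed \<in> D)"
    and rest: "\<forall>e\<in>E - {ed}. fst e \<in> D \<longleftrightarrow> snd e \<in> D"
    and ginv: "\<And>\<eta>. \<eta> \<in> block_confs V B \<sigma> \<Longrightarrow> g (flip D \<eta>) = g \<eta>"
  shows "(\<Sum>\<eta>\<in>block_confs V B \<sigma>. g \<eta> * ht_weight \<theta> E \<eta>) = (\<Sum>\<eta>\<in>block_confs V B \<sigma>. g \<eta> * ht_weight \<theta> (E - {ed}) \<eta>)"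
proof -
  have z: "(\<Sum>\<eta>\<in>block_confs V B \<sigma>. g \<eta> * (\<theta> * \<eta> (fst ed) * \<eta> (snd ed)) * ht_weight \<theta> (E - {ed}) \<eta>) = 0"
  proof (rule sum_flip_zero[OF fin D])
    fix \<eta> assume "\<eta> \<in> block_confs V B \<sigma>"
    then have "g (flip D \<eta>) = g \<eta>" by (rule ginv)
    moreover have "ht_weight \<theta> (E - {ed}) (flip D \<eta>) = ht_weight \<theta> (E - {ed}) \<eta>" by (rule ht_weight_flip_inv[OF rest])
    moreover have "flip D \<eta> (fst ed) * flip D \<eta> (snd ed) = - (\<eta> (fst ed) * \<eta> (snd ed))"
      using cross by (auto simp: flip_def)
    ultimately show "g (flip D \<eta>) * (\<theta> * flip D \<eta> (fst ed) * flip D \<eta> (snd ed)) * ht_weight \<theta> (E - {ed}) (flip D \<eta>)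
        = - (g \<eta> * (\<theta> * \<eta> (fst ed) * \<eta> (snd ed)) * ht_weight \<theta> (E - {ed}) \<eta>)"
      by (simp add: mult.assoc)
  qed
  have "(\<Sum>\<eta>\<in>block_confs V B \<sigma>. g \<eta> * ht_weight \<theta> E \<eta>)
      = (\<Sum>\<eta>\<in>block_confs V B \<sigma>. g \<eta> * ht_weight \<theta> (E - {ed}) \<eta> + g \<eta> * (\<theta> * \<eta> (fst ed) * \<eta> (snd ed)) * ht_weight \<theta> (E - {ed}) \<eta>)"
    by (rule sum.cong[OF refl]) (simp add: ht_weight_remove[OF finE ed] algebra_simps)
  also have "\<dots> = (\<Sum>\<eta>\<in>block_confs V B \<sigma>. g \<eta> * ht_weight \<theta> (E - {ed}) \<eta>)"
    using z by (simp add: sum.distrib)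
  finally show ?thesis .
qed

text \<open>Moving a spin along an edge: if flipping the site u changes only the factor of
  the edge ed = {u, u'}, then the observable \<eta>(u) is transported to
  \<eta>(u') at the cost of a factor \<theta>.\<close>
lemma move_edge:
  assumes fin: "finite V" and finE: "finite E" and u: "u \<in> B" "u \<in> V"
    and ed: "ed \<in> E" and ends: "(fst ed = u \<and> snd ed = u') \<or> (snd ed = u \<and> fst ed = u')" and uu: "u' \<noteq> u"
    and rest: "\<forall>e\<in>E - {ed}. fst e = u \<longleftrightarrow> snd e = u"
    and ginv: "\<And>\<eta>. \<eta> \<in> block_confs V B \<sigma> \<Longrightarrow> g (flip {u} \<eta>) = g \<eta>"
  shows "(\<Sum>\<eta>\<in>block_confs V B \<sigma>. g \<eta> * \<eta> u * ht_weight \<theta> E \<eta>) = \<theta> * (\<Sum>\<eta>\<in>block_confs V B \<sigma>. g \<eta> * \<eta> u' * ht_weight \<theta> (E - {ed}) \<eta>)"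
proof -
  have D: "{u} \<subseteq> B" "{u} \<subseteq> V" using u by auto
  have rest': "\<forall>e\<in>E - {ed}. fst e \<in> {u} \<longleftrightarrow> snd e \<in> {u}" using rest by auto
  have z: "(\<Sum>\<eta>\<in>block_confs V B \<sigma>. g \<eta> * \<eta> u * ht_weight \<theta> (E - {ed}) \<eta>) = 0"
  proof (rule sum_flip_zero[OF fin D])
    fix \<eta> assume "\<eta> \<in> block_confs V B \<sigma>"
    then have "g (flip {u} \<eta>) = g \<eta>" by (rule ginv)
    moreover have "ht_weight \<theta> (E - {ed}) (flip {u} \<eta>) = ht_weight \<theta> (E - {ed}) \<eta>" by (rule ht_weight_flip_inv[OF rest'])
    ultimately show "g (flip {u} \<eta>) * flip {u} \<eta> u * ht_weight \<theta> (E - {ed}) (flip {u} \<eta>)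
        = - (g \<eta> * \<eta> u * ht_weight \<theta> (E - {ed}) \<eta>)"
      by (simp add: flip_def)
  qed
  have "(\<Sum>\<eta>\<in>block_confs V B \<sigma>. g \<eta> * \<eta> u * ht_weight \<theta> E \<eta>)
      = (\<Sum>\<eta>\<in>block_confs V B \<sigma>. g \<eta> * \<eta> u * ht_weight \<theta> (E - {ed}) \<eta> + \<theta> * (g \<eta> * \<eta> u' * ht_weight \<theta> (E - {ed}) \<eta>))"
  proof (rule sum.cong[OF refl])
    fix \<eta> assume "\<eta> \<in> block_confs V B \<sigma>"
    then have sq: "\<eta> u * \<eta> u = 1" using block_confs_sub confs_sq by blast
    have "\<eta> u * (\<eta> (fst ed) * \<eta> (snd ed)) = \<eta> u'"
      using ends sq uu by (metis mult.assoc mult.commute mult_1_left)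
    then show "g \<eta> * \<eta> u * ht_weight \<theta> E \<eta> = g \<eta> * \<eta> u * ht_weight \<theta> (E - {ed}) \<eta> + \<theta> * (g \<eta> * \<eta> u' * ht_weight \<theta> (E - {ed}) \<eta>)"
      by (simp add: ht_weight_remove[OF finE ed] algebra_simps)
  qed
  also have "\<dots> = \<theta> * (\<Sum>\<eta>\<in>block_confs V B \<sigma>. g \<eta> * \<eta> u' * ht_weight \<theta> (E - {ed}) \<eta>)"
    using z by (simp add: sum.distrib sum_distrib_left)
  finally show ?thesis .
qed

definition path_edges :: "nat list \<Rightarrow> nat \<Rightarrow> nat \<Rightarrow> (nat list \<times> nat list) set" where
  "path_edges w l k = {(take j w, take (Suc j) w) | j. l \<le> j \<and> j < l + k}"

lemma path_edges_Suc: "path_edges w l (Suc k) = insert (take (l + k) w, take (Suc (l + k)) w) (path_edges w l k)"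
  unfolding path_edges_def by (auto simp: less_Suc_eq)

lemma path_next_edge:
  fixes w :: "nat list"
  assumes rw: "r = length w" and k: "l + k < r"
    and PEsub: "\<forall>j. l \<le> j \<and> j < r \<longrightarrow> (take j w, take (Suc j) w) \<in> E0"
    and touch: "\<forall>j. l \<le> j \<and> j < r \<longrightarrow> (\<forall>e\<in>E0. (fst e = take j w \<or> snd e = take j w) \<longrightarrow>
                  (\<exists>j'. l \<le> j' \<and> j' < r \<and> e = (take j' w, take (Suc j') w)))"
  shows "(take (l + k) w, take (Suc (l + k)) w) \<in> E0 - path_edges w l k"
    and "\<forall>e\<in>E0 - path_edges w l k - {(take (l + k) w, take (Suc (l + k)) w)}.
           fst e \<noteq> take (l + k) w \<and> snd e \<noteq> take (l + k) w"
proof -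
  have inj: "i = j" if "i \<le> r" "j \<le> r" "take i w = take j w" for i j
    using take_inj[of i w j] that rw by simp
  have "(take (l + k) w, take (Suc (l + k)) w) \<notin> path_edges w l k"
  proof
    assume "(take (l + k) w, take (Suc (l + k)) w) \<in> path_edges w l k"
    then obtain j where "j < l + k" "take (l + k) w = take j w" by (auto simp: path_edges_def)
    then show False using inj[of "l + k" j] k by simp
  qed
  then show "(take (l + k) w, take (Suc (l + k)) w) \<in> E0 - path_edges w l k"
    using PEsub k by simp
  show "\<forall>e\<in>E0 - path_edges w l k - {(take (l + k) w, take (Suc (l + k)) w)}.
           fst e \<noteq> take (l + k) w \<and> snd e \<noteq> take (l + k) w"
  proof (intro ballI)
    fix e assume e: "e \<in> E0 - path_edges w l k - {(take (l + k) w, take (Suc (l + k)) w)}"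
    show "fst e \<noteq> take (l + k) w \<and> snd e \<noteq> take (l + k) w"
    proof (rule ccontr)
      assume touches: "\<not> (fst e \<noteq> take (l + k) w \<and> snd e \<noteq> take (l + k) w)"
      have "e \<in> E0" using e by simp
      moreover have "fst e = take (l + k) w \<or> snd e = take (l + k) w" using touches by blast
      ultimately obtain j' where j': "l \<le> j'" "j' < r" "e = (take j' w, take (Suc j') w)"
        using touch[rule_format, of "l + k" e] k by auto
      then have "j' = l + k \<or> Suc j' = l + k" using touches inj k by auto
      then show False using e j' by (auto simp: path_edges_def)
    qed
  qed
qed

text \<open>Cutting a path inside the block, edge by edge: the weight of the event
  {spin s at w} does not feel the path, while the spin at the top of the path is
  transported to depth l + k at the cost of a factor \<theta>^k.\<close>
lemma path_cut:
  fixes w :: "nat list" and \<theta> :: real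
  assumes fin: "finite V" and finE: "finite E0" and lr: "l \<le> r" and rw: "r = length w"
    and pathB: "\<forall>j. l \<le> j \<and> j < r \<longrightarrow> take j w \<in> B \<and> take j w \<in> V"
    and PEsub: "\<forall>j. l \<le> j \<and> j < r \<longrightarrow> (take j w, take (Suc j) w) \<in> E0"
    and touch: "\<forall>j. l \<le> j \<and> j < r \<longrightarrow> (\<forall>e\<in>E0. (fst e = take j w \<or> snd e = take j w) \<longrightarrow>
                  (\<exists>j'. l \<le> j' \<and> j' < r \<and> e = (take j' w, take (Suc j') w)))"
  shows "k \<le> r - l \<Longrightarrow>
     (\<Sum>\<eta>\<in>block_confs V B \<sigma>. (if \<eta> w = s then 1 else 0) * ht_weight \<theta> E0 \<eta>)
       = (\<Sum>\<eta>\<in>block_confs V B \<sigma>. (if \<eta> w = s then 1 else 0) * ht_weight \<theta> (E0 - path_edges w l k) \<eta>)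
   \<and> (\<Sum>\<eta>\<in>block_confs V B \<sigma>. (if \<eta> w = s then 1 else 0) * \<eta> (take l w) * ht_weight \<theta> E0 \<eta>)
       = \<theta> ^ k * (\<Sum>\<eta>\<in>block_confs V B \<sigma>. (if \<eta> w = s then 1 else 0) * \<eta> (take (l + k) w) * ht_weight \<theta> (E0 - path_edges w l k) \<eta>)"
proof (induction k)
  case 0
  have "path_edges w l 0 = {}" by (simp add: path_edges_def)
  then show ?case by simp
next
  case (Suc k)
  then have k: "l + k < r" by simp
  let ?g = "\<lambda>\<eta>. if \<eta> w = s then 1 else (0::real)"
  define u where "u = take (l + k) w"
  define u' where "u' = take (Suc (l + k)) w"
  define E where "E = E0 - path_edges w l k"
  have finE': "finite E" using finE by (simp add: E_def)
  have uB: "u \<in> B" "u \<in> V" using pathB k by (auto simp: u_def)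
  have uu: "u' \<noteq> u" using take_inj[of "Suc (l+k)" w "l+k"] k rw by (auto simp: u_def u'_def)
  have uw: "u \<noteq> w" using take_inj[of "l+k" w "length w"] k rw by (auto simp: u_def)
  have next_edge: "(u, u') \<in> E" and isolated: "\<forall>e\<in>E - {(u, u')}. fst e \<noteq> u \<and> snd e \<noteq> u"
    using path_next_edge[OF rw k PEsub touch] by (simp_all add: E_def u_def u'_def)
  have g_inv: "?g (flip {u} \<eta>) = ?g \<eta>" for \<eta> using uw by (simp add: flip_def)
  have E_next: "E0 - path_edges w l (Suc k) = E - {(u, u')}"
    by (auto simp: E_def path_edges_Suc u_def u'_def)
  have cut: "(\<Sum>\<eta>\<in>block_confs V B \<sigma>. ?g \<eta> * ht_weight \<theta> E \<eta>)
      = (\<Sum>\<eta>\<in>block_confs V B \<sigma>. ?g \<eta> * ht_weight \<theta> (E - {(u, u')}) \<eta>)"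
    by (rule cut_edge[OF fin finE', where D="{u}"]) (use uB next_edge uu isolated g_inv in auto)
  have move: "(\<Sum>\<eta>\<in>block_confs V B \<sigma>. ?g \<eta> * \<eta> u * ht_weight \<theta> E \<eta>)
      = \<theta> * (\<Sum>\<eta>\<in>block_confs V B \<sigma>. ?g \<eta> * \<eta> u' * ht_weight \<theta> (E - {(u, u')}) \<eta>)"
    by (rule move_edge[OF fin finE' uB next_edge _ uu]) (use isolated g_inv in auto)
  show ?case
    using Suc.IH[OF Suc_leD[OF Suc.prems]] cut move
    unfolding E_next E_def[symmetric] u_def u'_def
    by (simp add: add.commute add.left_commute)
qed

lemma subtree_cross:
  assumes "e \<in> edges V" "e' \<in> edges V" "snd e = c" "e' \<noteq> e"
  shows "prefix c (fst e') \<longleftrightarrow> prefix c (snd e')"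
proof -
  obtain a i where e: "e = (a, a @ [i])" using assms(1) by (rule edgesE)
  obtain a' i' where e': "e' = (a', a' @ [i'])" using assms(2) by (rule edgesE)
  show ?thesis
  proof
    assume "prefix c (fst e')" then show "prefix c (snd e')" using e' by simp
  next
    assume h: "prefix c (snd e')"
    show "prefix c (fst e')"
    proof (rule ccontr)
      assume "\<not> prefix c (fst e')"
      then have "c = a' @ [i']" using h e' by simp
      then have "a' @ [i'] = a @ [i]" using assms(3) e by simp
      then have "e' = e" using e e' by simp
      then show False using assms(4) by simp
    qed
  qed
qed

lemma subtree_cuts:
  assumes fin: "finite V" and finE: "finite E" and EV: "E \<subseteq> edges V" and FB: "FB \<subseteq> E"
    and sub: "\<forall>e\<in>FB. {x \<in> V. prefix (snd e) x} \<subseteq> B \<and> \<not> prefix (snd e) (fst e)"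
    and ginv: "\<forall>e\<in>FB. \<forall>\<eta>\<in>block_confs V B \<sigma>. g (flip {x \<in> V. prefix (snd e) x} \<eta>) = g \<eta>"
  shows "(\<Sum>\<eta>\<in>block_confs V B \<sigma>. g \<eta> * ht_weight \<theta> E \<eta>) = (\<Sum>\<eta>\<in>block_confs V B \<sigma>. g \<eta> * ht_weight \<theta> (E - FB) \<eta>)"
proof -
  have finFB: "finite FB" using finE FB finite_subset by blast
  have "finite F \<Longrightarrow> F \<subseteq> FB \<Longrightarrow> (\<Sum>\<eta>\<in>block_confs V B \<sigma>. g \<eta> * ht_weight \<theta> E \<eta>) = (\<Sum>\<eta>\<in>block_confs V B \<sigma>. g \<eta> * ht_weight \<theta> (E - F) \<eta>)" for F
  proof (induction F rule: finite_induct)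
    case empty then show ?case by simp
  next
    case (insert e F)
    have eFB: "e \<in> FB" using insert.prems by auto
    have IH: "(\<Sum>\<eta>\<in>block_confs V B \<sigma>. g \<eta> * ht_weight \<theta> E \<eta>) = (\<Sum>\<eta>\<in>block_confs V B \<sigma>. g \<eta> * ht_weight \<theta> (E - F) \<eta>)"
      using insert.IH insert.prems by auto
    define D where "D = {x \<in> V. prefix (snd e) x}"
    have eE: "e \<in> E - F" using insert.hyps eFB FB by auto
    have eV: "e \<in> edges V" using eE EV by auto
    have DB: "D \<subseteq> B" "D \<subseteq> V" using sub eFB by (auto simp: D_def)
    have sndV: "snd e \<in> V" "fst e \<in> V" using eV by (auto simp: edges_def)
    have cross: "(fst e \<in> D) \<noteq> (snd e \<in> D)" using sub eFB sndV by (auto simp: D_def)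
    have rest: "\<forall>e'\<in>(E - F) - {e}. fst e' \<in> D \<longleftrightarrow> snd e' \<in> D"
    proof
      fix e' assume e': "e' \<in> (E - F) - {e}"
      then have e'V: "e' \<in> edges V" using EV by auto
      then have "fst e' \<in> V" "snd e' \<in> V" by (auto simp: edges_def)
      moreover have "prefix (snd e) (fst e') \<longleftrightarrow> prefix (snd e) (snd e')"
        using subtree_cross[OF eV e'V refl] e' by auto
      ultimately show "fst e' \<in> D \<longleftrightarrow> snd e' \<in> D" by (auto simp: D_def)
    qed
    have "(\<Sum>\<eta>\<in>block_confs V B \<sigma>. g \<eta> * ht_weight \<theta> (E - F) \<eta>) = (\<Sum>\<eta>\<in>block_confs V B \<sigma>. g \<eta> * ht_weight \<theta> ((E - F) - {e}) \<eta>)"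
      by (rule cut_edge[OF fin _ DB eE cross rest]) (use finE ginv eFB in \<open>auto simp: D_def\<close>)
    moreover have "(E - F) - {e} = E - insert e F" by auto
    ultimately show ?case using IH by simp
  qed
  then show ?thesis using finFB by simp
qed

lemma sum_frozen_weight:
  assumes fin: "finite V" and \<sigma>: "\<sigma> \<in> confs V" and wB: "w \<in> B" and BV: "B \<subseteq> V" and finE: "finite E"
    and nt: "\<forall>e\<in>E. fst e \<notin> B - {w} \<and> snd e \<notin> B - {w}"
  shows "(\<Sum>\<eta>\<in>block_confs V B \<sigma>. (if \<eta> w = s then 1 else 0) * ht_weight \<theta> E \<eta>)
       = real (card {\<eta>\<in>block_confs V B \<sigma>. \<eta> w = s}) * ht_weight \<theta> E (\<sigma>(w := s))"
proof -
  have eq: "ht_weight \<theta> E \<eta> = ht_weight \<theta> E (\<sigma>(w := s))" if "\<eta> \<in> block_confs V B \<sigma>" "\<eta> w = s" for \<eta>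
    unfolding ht_weight_def
  proof (rule prod.cong[OF refl])
    fix e assume e: "e \<in> E"
    have ag: "\<eta> u = (\<sigma>(w := s)) u" if "u \<notin> B - {w}" for u
    proof (cases "u = w")
      case True then show ?thesis using \<open>\<eta> w = s\<close> by simp
    next
      case False
      then have "u \<notin> B" using that by simp
      show ?thesis
      proof (cases "u \<in> V")
        case True then show ?thesis using \<open>\<eta> \<in> block_confs V B \<sigma>\<close> \<open>u \<notin> B\<close> False by (auto simp: block_confs_def)
      next
        case nV: False
        then have "\<eta> u = 1" "\<sigma> u = 1" using \<open>\<eta> \<in> block_confs V B \<sigma>\<close> \<sigma> by (auto simp: block_confs_def confs_def)
        then show ?thesis using False by simp
      qed
    qed
    show "1 + \<theta> * \<eta> (fst e) * \<eta> (snd e) = 1 + \<theta> * (\<sigma>(w := s)) (fst e) * (\<sigma>(w := s)) (snd e)"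
      using ag nt e by auto
  qed
  have "(\<Sum>\<eta>\<in>block_confs V B \<sigma>. (if \<eta> w = s then 1 else 0) * ht_weight \<theta> E \<eta>)
      = (\<Sum>\<eta>\<in>{\<eta>\<in>block_confs V B \<sigma>. \<eta> w = s}. ht_weight \<theta> E \<eta>)"
  proof -
    have "(\<Sum>\<eta>\<in>block_confs V B \<sigma>. (if \<eta> w = s then 1 else 0) * ht_weight \<theta> E \<eta>)
        = (\<Sum>\<eta>\<in>block_confs V B \<sigma>. if \<eta> w = s then ht_weight \<theta> E \<eta> else 0)" by (rule sum.cong) auto
    also have "\<dots> = (\<Sum>\<eta>\<in>{\<eta>\<in>block_confs V B \<sigma>. \<eta> w = s}. ht_weight \<theta> E \<eta>)"
      using finite_block_confs[OF fin] by (simp add: sum.inter_filter)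
    finally show ?thesis .
  qed
  also have "\<dots> = (\<Sum>\<eta>\<in>{\<eta>\<in>block_confs V B \<sigma>. \<eta> w = s}. ht_weight \<theta> E (\<sigma>(w := s)))"
    by (rule sum.cong) (auto simp: eq)
  finally show ?thesis by simp
qed

lemma single_site_marginal:
  assumes fin: "finite V" and \<sigma>: "\<sigma> \<in> confs V" and u: "u \<in> V" and \<beta>: "\<beta> > 0" and t: "t = 1 \<or> t = -1"
  shows "(\<Sum>\<eta>\<in>{\<eta>\<in>confs V. \<eta> u = t}. block_kernel \<beta> V {u} \<sigma> \<eta>)
     = ht_weight (tanh \<beta>) {e\<in>edges V. fst e = u \<or> snd e = u} (\<sigma>(u := t))
       / (ht_weight (tanh \<beta>) {e\<in>edges V. fst e = u \<or> snd e = u} (\<sigma>(u := 1)) + ht_weight (tanh \<beta>) {e\<in>edges V. fst e = u \<or> snd e = u} (\<sigma>(u := -1)))"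
proof -
  let ?\<theta> = "tanh \<beta>"
  let ?Eu = "{e\<in>edges V. fst e = u \<or> snd e = u}"
  define Z where "Z = (\<lambda>t. \<Sum>\<eta>\<in>block_confs V {u} \<sigma>. (if \<eta> u = t then 1 else 0) * ht_weight ?\<theta> (edges V) \<eta>)"
  define N where "N = real (card {\<eta>\<in>block_confs V {u} \<sigma>. \<eta> u = 1})"
  define c where "c = ht_weight ?\<theta> {e\<in>edges V. \<not> (fst e = u \<or> snd e = u)} \<sigma>"
  have \<theta>a: "\<bar>?\<theta>\<bar> < 1" using \<beta> tanh_real_lt_1[of \<beta>] by simp
  have finE: "finite (edges V)" using finite_edges[OF fin] .
  have N': "real (card {\<eta>\<in>block_confs V {u} \<sigma>. \<eta> u = -1}) = N" using card_pinned_sym[of u "{u}" V] u by (simp add: N_def)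
  have Np: "N > 0" using card_pinned_pos[OF fin \<sigma> _ u, of "{u}" 1] by (simp add: N_def)
  have cp: "c > 0" unfolding c_def by (rule ht_weight_pos[OF _ \<theta>a]) (use confs_val[OF \<sigma>] in blast)
  have Zf: "Z t' = N * (ht_weight ?\<theta> ?Eu (\<sigma>(u := t')) * c)" if t': "t' = 1 \<or> t' = -1" for t'
  proof -
    have "Z t' = real (card {\<eta>\<in>block_confs V {u} \<sigma>. \<eta> u = t'}) * ht_weight ?\<theta> (edges V) (\<sigma>(u := t'))"
      unfolding Z_def by (rule sum_frozen_weight[OF fin \<sigma>]) (use u finE in auto)
    moreover have "real (card {\<eta>\<in>block_confs V {u} \<sigma>. \<eta> u = t'}) = N" using t' N' by (auto simp: N_def)
    ultimately show ?thesis using split_w[OF finE, of ?\<theta> \<sigma> u t'] by (simp add: c_def)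
  qed
  have "(\<Sum>\<eta>\<in>{\<eta>\<in>confs V. \<eta> u = t}. block_kernel \<beta> V {u} \<sigma> \<eta>) = Z t / (Z 1 + Z (-1))"
    by (rule block_kernel_marginal_ratio[OF fin \<sigma>]) (simp add: Z_def)
  moreover have "Z t / (Z 1 + Z (-1)) = ht_weight ?\<theta> ?Eu (\<sigma>(u := t)) / (ht_weight ?\<theta> ?Eu (\<sigma>(u := 1)) + ht_weight ?\<theta> ?Eu (\<sigma>(u := -1)))"
  proof -
    have "Z t / (Z 1 + Z (-1)) = (N * c) * ht_weight ?\<theta> ?Eu (\<sigma>(u := t)) / ((N * c) * (ht_weight ?\<theta> ?Eu (\<sigma>(u := 1)) + ht_weight ?\<theta> ?Eu (\<sigma>(u := -1))))"
      using Zf[OF t] Zf[of 1] Zf[of "-1"] by (simp add: algebra_simps)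
    then show ?thesis using Np cp by simp
  qed
  ultimately show ?thesis by simp
qed

lemma ratio_perturbation:
  fixes h1 h2 e :: real
  assumes h1: "h1 > 0" and h2: "h2 > 0" and e: "\<bar>e\<bar> \<le> 1"
  shows "\<bar>(1 + e) * h1 / ((1 + e) * h1 + (1 - e) * h2) - h1 / (h1 + h2)\<bar> \<le> \<bar>e\<bar>"
proof -
  define D1 where "D1 = (1 + e) * h1 + (1 - e) * h2"
  define D2 where "D2 = h1 + h2"
  have D2p: "D2 > 0" using h1 h2 by (simp add: D2_def)
  have key: "D1 * D2 - 2 * h1 * h2 = (1 + e) * h1 * h1 + (1 - e) * h2 * h2"
    by (simp add: D1_def D2_def algebra_simps)
  have ep: "1 + e \<ge> 0" "1 - e \<ge> 0" using e by auto
  have D1p: "D1 > 0"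
  proof -
    have "D1 = (h1 + h2) + e * (h1 - h2)" by (simp add: D1_def algebra_simps)
    have "(1 + e) * h1 \<ge> 0" "(1 - e) * h2 \<ge> 0" using ep h1 h2 by auto
    moreover have "(1 + e) * h1 > 0 \<or> (1 - e) * h2 > 0"
    proof (cases "e \<ge> 0")
      case True then show ?thesis using h1 by simp
    next
      case False then show ?thesis using h2 by simp
    qed
    ultimately show ?thesis by (auto simp: D1_def)
  qed
  have diff: "(1 + e) * h1 / D1 - h1 / D2 = e * (2 * h1 * h2 / (D1 * D2))"
    using D1p D2p by (simp add: D1_def D2_def field_simps)
  have le1: "2 * h1 * h2 / (D1 * D2) \<le> 1"
  proof -
    have "(1 + e) * h1 * h1 + (1 - e) * h2 * h2 \<ge> 0" using ep h1 h2 by (simp add: mult_nonneg_nonneg)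
    then have "2 * h1 * h2 \<le> D1 * D2" using key by linarith
    then show ?thesis using D1p D2p by simp
  qed
  have nn: "2 * h1 * h2 / (D1 * D2) \<ge> 0" using h1 h2 D1p D2p by simp
  have "\<bar>e * (2 * h1 * h2 / (D1 * D2))\<bar> = \<bar>e\<bar> * (2 * h1 * h2 / (D1 * D2))" using nn by (metis abs_mult abs_of_nonneg)
  also have "\<dots> \<le> \<bar>e\<bar> * 1" using le1 by (intro mult_left_mono) auto
  finally show ?thesis using diff by (simp add: D1_def D2_def)
qed

lemma ratio_perturbation_minus:
  fixes h1 h2 e :: real
  assumes h1: "h1 > 0" and h2: "h2 > 0" and e: "\<bar>e\<bar> \<le> 1"
  shows "\<bar>(1 - e) * h2 / ((1 + e) * h1 + (1 - e) * h2) - h2 / (h1 + h2)\<bar> \<le> \<bar>e\<bar>"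
proof -
  have "\<bar>(1 + (-e)) * h2 / ((1 + (-e)) * h2 + (1 - (-e)) * h1) - h2 / (h2 + h1)\<bar> \<le> \<bar>-e\<bar>"
    by (rule ratio_perturbation) (use h1 h2 e in auto)
  then show ?thesis by (simp add: add.commute)
qed

section \<open>Leaving rates of coupled heat-bath updates\<close>

lemma leave_rate_pinned_site:
  assumes fin1: "finite V1" and fin2: "finite V2" and G1: "G \<subseteq> V1" and G2: "G \<subseteq> V2"
    and uG: "u \<in> G" and B1: "B1 \<inter> G \<subseteq> {u}" and B2: "B2 \<inter> G \<subseteq> {u}"
    and xy: "(x, y) \<in> {(x, y) \<in> confs V1 \<times> confs V2. \<forall>u\<in>G. x u = y u}"
    and diff: "\<bar>(\<Sum>\<eta>\<in>{\<eta>\<in>confs V1. \<eta> u = - x u}. block_kernel \<beta> V1 B1 x \<eta>)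
               - (\<Sum>\<eta>\<in>{\<eta>\<in>confs V2. \<eta> u = - x u}. block_kernel \<beta> V2 B2 y \<eta>)\<bar> \<le> \<delta>"
  shows "(\<Sum>z'\<in>confs V1 \<times> confs V2 - {(x, y) \<in> confs V1 \<times> confs V2. \<forall>u\<in>G. x u = y u}.
           coupled_rate (confs V1) (confs V2) (block_kernel \<beta> V1 B1) (block_kernel \<beta> V2 B2)
             (\<lambda>a. a u) (\<lambda>a. a u) (x, y) z') \<le> \<delta>"
proof -
  let ?A = "{(x, y) \<in> confs V1 \<times> confs V2. \<forall>u\<in>G. x u = y u}"
  have x: "x \<in> confs V1" and y: "y \<in> confs V2" and ag: "\<forall>u\<in>G. x u = y u" using xy by auto
  have finS1: "finite (confs V1)" and finS2: "finite (confs V2)" using finite_confs fin1 fin2 by auto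
  define k1 where "k1 = - x u"
  have xu: "x u = 1 \<or> x u = -1" using confs_val[OF x] .
  have k1: "x u \<noteq> k1" using xu by (auto simp: k1_def)
  have yu: "y u = x u" using ag uG by simp
  have fix1: "x' u' = x u'" if "block_kernel \<beta> V1 B1 x x' > 0" "u' \<in> G" "u' \<noteq> u" for x' u'
    using block_kernel_support[of \<beta> V1 B1 x x'] that G1 B1 by (auto simp: block_confs_def)
  have fix2: "y' u' = y u'" if "block_kernel \<beta> V2 B2 y y' > 0" "u' \<in> G" "u' \<noteq> u" for y' u'
    using block_kernel_support[of \<beta> V2 B2 y y'] that G2 B2 by (auto simp: block_confs_def)
  have "(\<Sum>z'\<in>confs V1 \<times> confs V2 - ?A.
           coupled_rate (confs V1) (confs V2) (block_kernel \<beta> V1 B1) (block_kernel \<beta> V2 B2) (\<lambda>a. a u) (\<lambda>a. a u) (x, y) z')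
     \<le> \<bar>stat_rate (confs V1) (block_kernel \<beta> V1 B1) (\<lambda>a. a u) x k1
        - stat_rate (confs V2) (block_kernel \<beta> V2 B2) (\<lambda>a. a u) y k1\<bar>"
  proof (rule coupled_rate_leave[OF finS1 finS2 x y])
    show "\<forall>a b. 0 \<le> block_kernel \<beta> V1 B1 a b" "\<forall>a b. 0 \<le> block_kernel \<beta> V2 B2 a b"
      using block_kernel_nonneg by auto
    show "\<forall>x'\<in>confs V1. \<forall>y'\<in>confs V2. x' \<noteq> x \<longrightarrow> y' \<noteq> y \<longrightarrow> block_kernel \<beta> V1 B1 x x' > 0
            \<longrightarrow> block_kernel \<beta> V2 B2 y y' > 0 \<longrightarrow> x' u = y' u \<longrightarrow> (x', y') \<in> ?A"
    proof (intro ballI impI)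
      fix x' y' assume x': "x' \<in> confs V1" and y': "y' \<in> confs V2"
        and p1: "block_kernel \<beta> V1 B1 x x' > 0" and p2: "block_kernel \<beta> V2 B2 y y' > 0"
        and same: "x' u = y' u"
      have "x' u' = y' u'" if u'G: "u' \<in> G" for u'
        using same fix1[OF p1 u'G] fix2[OF p2 u'G] ag u'G by (cases "u' = u") auto
      then show "(x', y') \<in> ?A" using x' y' by simp
    qed
    show "\<forall>x'\<in>confs V1. x' \<noteq> x \<longrightarrow> block_kernel \<beta> V1 B1 x x' > 0 \<longrightarrow> (x', y) \<notin> ?A \<longrightarrow> x' u = k1"
    proof (intro ballI impI)
      fix x' assume x': "x' \<in> confs V1" and p1: "block_kernel \<beta> V1 B1 x x' > 0" and nA: "(x', y) \<notin> ?A"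
      then obtain u' where u'G: "u' \<in> G" and d: "x' u' \<noteq> y u'" using y by auto
      have "u' = u" using fix1[OF p1 u'G] ag u'G d by auto
      then show "x' u = k1" using d yu confs_val[OF x', of u] xu by (auto simp: k1_def)
    qed
    show "\<forall>y'\<in>confs V2. y' \<noteq> y \<longrightarrow> block_kernel \<beta> V2 B2 y y' > 0 \<longrightarrow> (x, y') \<notin> ?A \<longrightarrow> y' u = k1"
    proof (intro ballI impI)
      fix y' assume y': "y' \<in> confs V2" and p2: "block_kernel \<beta> V2 B2 y y' > 0" and nA: "(x, y') \<notin> ?A"
      then obtain u' where u'G: "u' \<in> G" and d: "x u' \<noteq> y' u'" using x by auto
      have "u' = u" using fix2[OF p2 u'G] ag u'G d by auto
      then show "y' u = k1" using d confs_val[OF y', of u] xu by (auto simp: k1_def)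
    qed
  qed
  also have "stat_rate (confs V1) (block_kernel \<beta> V1 B1) (\<lambda>a. a u) x k1
      = (\<Sum>\<eta>\<in>{\<eta>\<in>confs V1. \<eta> u = k1}. block_kernel \<beta> V1 B1 x \<eta>)"
    by (rule stat_rate_eq[OF finS1 x]) (use k1 in simp)
  also have "stat_rate (confs V2) (block_kernel \<beta> V2 B2) (\<lambda>a. a u) y k1
      = (\<Sum>\<eta>\<in>{\<eta>\<in>confs V2. \<eta> u = k1}. block_kernel \<beta> V2 B2 y \<eta>)"
    by (rule stat_rate_eq[OF finS2 y]) (use k1 yu in simp)
  finally show ?thesis using diff by (simp add: k1_def)
qed

lemma leave_rate_single_off_G:
  assumes fin1: "finite V1" and fin2: "finite V2" and G1: "G \<subseteq> V1" and uG: "u \<notin> G" and uV: "u \<in> V1"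
    and xy: "(x, y) \<in> {(x, y) \<in> confs V1 \<times> confs V2. \<forall>u\<in>G. x u = y u}"
    and \<nu>0: "\<forall>a b. 0 \<le> \<nu> a b" and \<nu>s: "\<And>y'. \<nu> y y' > 0 \<Longrightarrow> \<forall>u'\<in>G. y' u' = y u'"
  shows "(\<Sum>z'\<in>confs V1 \<times> confs V2 - {(x, y) \<in> confs V1 \<times> confs V2. \<forall>u\<in>G. x u = y u}.
           coupled_rate (confs V1) (confs V2) (block_kernel \<beta> V1 {u}) \<nu> (\<lambda>a. a u) (\<lambda>a. a u) (x, y) z') \<le> 0"
proof -
  let ?A = "{(x, y) \<in> confs V1 \<times> confs V2. \<forall>u\<in>G. x u = y u}"
  have x: "x \<in> confs V1" and y: "y \<in> confs V2" and ag: "\<forall>u\<in>G. x u = y u" using xy by auto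
  have finS1: "finite (confs V1)" and finS2: "finite (confs V2)" using finite_confs fin1 fin2 by auto
  have sup1: "\<forall>u'\<in>G. x' u' = x u'" if "block_kernel \<beta> V1 {u} x x' > 0" for x'
    using block_kernel_support[of \<beta> V1 "{u}" x x'] that G1 uG by (auto simp: block_confs_def)
  have "(\<Sum>z'\<in>confs V1 \<times> confs V2 - ?A.
           coupled_rate (confs V1) (confs V2) (block_kernel \<beta> V1 {u}) \<nu> (\<lambda>a. a u) (\<lambda>a. a u) (x, y) z')
     \<le> \<bar>stat_rate (confs V1) (block_kernel \<beta> V1 {u}) (\<lambda>a. a u) x 0 - stat_rate (confs V2) \<nu> (\<lambda>a. a u) y 0\<bar>"
  proof (rule coupled_rate_leave[OF finS1 finS2 x y _ \<nu>0])
    show "\<forall>a b. 0 \<le> block_kernel \<beta> V1 {u} a b" using block_kernel_nonneg by auto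
    show "\<forall>x'\<in>confs V1. \<forall>y'\<in>confs V2. x' \<noteq> x \<longrightarrow> y' \<noteq> y \<longrightarrow> block_kernel \<beta> V1 {u} x x' > 0
            \<longrightarrow> \<nu> y y' > 0 \<longrightarrow> x' u = y' u \<longrightarrow> (x', y') \<in> ?A"
      using sup1 \<nu>s ag by auto
    show "\<forall>x'\<in>confs V1. x' \<noteq> x \<longrightarrow> block_kernel \<beta> V1 {u} x x' > 0 \<longrightarrow> (x', y) \<notin> ?A \<longrightarrow> x' u = 0"
      using sup1 ag y by auto
    show "\<forall>y'\<in>confs V2. y' \<noteq> y \<longrightarrow> \<nu> y y' > 0 \<longrightarrow> (x, y') \<notin> ?A \<longrightarrow> y' u = 0"
      using \<nu>s ag x by auto
  qed
  also have "stat_rate (confs V1) (block_kernel \<beta> V1 {u}) (\<lambda>a. a u) x 0 = 0"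
  proof (rule stat_rate_zero, intro ballI)
    fix a assume "a \<in> confs V1" then show "a u \<noteq> 0" using confs_val[of a V1 u] by auto
  qed
  also have "stat_rate (confs V2) \<nu> (\<lambda>a. a u) y 0 = 0"
  proof (rule stat_rate_zero, intro ballI)
    fix a assume "a \<in> confs V2" then show "a u \<noteq> 0" using confs_val[of a V2 u] by auto
  qed
  finally show ?thesis by simp
qed

section \<open>The geometry of the blocks\<close>

locale tree_setting =
  fixes b h l r :: nat and wf :: "nat list \<Rightarrow> nat list"
  assumes wfa: "\<forall>v\<in>level b h l. wf v \<in> level b h r \<and> prefix v (wf v)"
    and l1: "1 \<le> l" and lr: "l < r" and rh: "r \<le> h"
begin

abbreviation "T \<equiv> tree_vertices b h"
abbreviation "F \<equiv> forest_F b h l wf"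
abbreviation "G \<equiv> set_G b h l wf"

lemma F_iff: "x \<in> F \<longleftrightarrow> (\<exists>v'\<in>level b h l. x \<in> path_L v' (wf v') \<or> x \<in> subtree b h (wf v'))"
  by (simp add: forest_F_def)

lemma F_T: "F \<subseteq> T"
proof
  fix x assume "x \<in> F"
  then obtain v' where v': "v' \<in> level b h l" and x: "x \<in> path_L v' (wf v') \<or> x \<in> subtree b h (wf v')"
    using F_iff by blast
  have "wf v' \<in> T" using wfa v' by (auto simp: level_def)
  then show "x \<in> T" using x tv_prefix by (auto simp: path_L_def subtree_def)
qed

lemma F_pre: "x \<in> F \<Longrightarrow> \<exists>v'\<in>level b h l. prefix v' x \<and> (prefix x (wf v') \<or> prefix (wf v') x)"
proof -
  assume "x \<in> F"
  then obtain v' where v': "v' \<in> level b h l" and x: "x \<in> path_L v' (wf v') \<or> x \<in> subtree b h (wf v')"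
    using F_iff by blast
  have "prefix v' (wf v')" using wfa v' by auto
  then show ?thesis using v' x by (auto simp: path_L_def subtree_def intro: prefix_order.trans)
qed

lemma F_len: "x \<in> F \<Longrightarrow> l \<le> length x"
  using F_pre prefix_len by (fastforce simp: level_def)

lemma G_pre: "u \<in> G \<Longrightarrow> \<exists>v'\<in>level b h l. prefix (wf v') u \<and> u \<in> T \<and> prefix v' u"
proof -
  assume "u \<in> G"
  then obtain v' where v': "v' \<in> level b h l" "u \<in> subtree b h (wf v')" by (auto simp: set_G_def)
  have "prefix v' (wf v')" using wfa v' by auto
  then show ?thesis using v' by (auto simp: subtree_def intro: prefix_order.trans)
qed

lemma G_F: "G \<subseteq> F" by (auto simp: set_G_def forest_F_def)

end

text \<open>One block: a fixed v at depth l, its target w = w_v, the block B_v, the path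
  L_v and the parent pv of v.  The edges of T are sorted into the parent edge of v,
  the side edges (entering B_v off the path), the path edges, and the outer edges
  that do not touch B_v except possibly at w.\<close>
locale block_setting = tree_setting +
  fixes v :: "nat list"
  assumes vL: "v \<in> level b h l"
begin

abbreviation "w \<equiv> wf v"
abbreviation "Bv \<equiv> block_B b h v w"
abbreviation "Lv \<equiv> path_L v w"
abbreviation "pv \<equiv> take (l - 1) w"
definition side_edges :: "(nat list \<times> nat list) set" where
  "side_edges = {e\<in>edges T. snd e \<in> Bv \<and> snd e \<notin> Lv}"
abbreviation "trimmed_edges_X \<equiv> edges T - {(pv, v)} - side_edges"
abbreviation "outer_edges_X \<equiv> trimmed_edges_X - path_edges w l (r - l)"
abbreviation "outer_edges_Y \<equiv> edges F - path_edges w l (r - l)"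
abbreviation "child_edges_w \<equiv> {e \<in> edges T. fst e = w}"

lemma wL: "w \<in> level b h r" and pvw: "prefix v w" using wfa vL by auto

lemma lenv: "length v = l" using vL by (simp add: level_def)

lemma lenw: "length w = r" using wL by (simp add: level_def)

lemma wT: "w \<in> T" using wL by (simp add: level_def)

lemma vT: "v \<in> T" using vL by (simp add: level_def)

lemma vtake: "v = take l w" using prefix_take_len[OF pvw] lenv by simp

lemma takeT: "take j w \<in> T" using tv_prefix[OF wT take_is_prefix] .

lemma Lv_iff: "x \<in> Lv \<longleftrightarrow> (\<exists>j. l \<le> j \<and> j \<le> r \<and> x = take j w)"
proof
  assume "x \<in> Lv"
  then have a: "prefix v x" "prefix x w" by (auto simp: path_L_def)
  then have "x = take (length x) w" "l \<le> length x" "length x \<le> r"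
    using prefix_take_len prefix_len lenv lenw by auto
  then show "\<exists>j. l \<le> j \<and> j \<le> r \<and> x = take j w" by blast
next
  assume "\<exists>j. l \<le> j \<and> j \<le> r \<and> x = take j w"
  then obtain j where j: "l \<le> j" "x = take j w" by blast
  then show "x \<in> Lv" unfolding path_L_def using take_prefix_take[OF j(1), of w] vtake take_is_prefix
    by auto
qed

lemma take_Lv: "l \<le> j \<Longrightarrow> j \<le> r \<Longrightarrow> take j w \<in> Lv"
  using Lv_iff by blast

lemma v_Lv: "v \<in> Lv" using take_Lv[of l] lr vtake by simp

lemma w_Lv: "w \<in> Lv" using take_Lv[of r] lr lenw by simp

lemma vw: "v \<noteq> w" using lenv lenw lr by auto

lemma Bv_iff: "x \<in> Bv \<longleftrightarrow> x \<in> T \<and> prefix v x \<and> (\<not> prefix w x \<or> x = w)"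
  unfolding block_B_def subtree_def using wT pvw by auto

lemma Bv_T: "Bv \<subseteq> T" using Bv_iff by auto

lemma take_Bv: "l \<le> j \<Longrightarrow> j \<le> r \<Longrightarrow> take j w \<in> Bv"
proof -
  assume j: "l \<le> j" "j \<le> r"
  have "prefix v (take j w)" using take_prefix_take[OF j(1), of w] vtake by simp
  moreover have "\<not> prefix w (take j w) \<or> take j w = w"
  proof (cases "j = r")
    case True then show ?thesis using lenw by simp
  next
    case False
    then have "length (take j w) < length w" using j lenw by simp
    then show ?thesis using prefix_len by fastforce
  qed
  ultimately show ?thesis using Bv_iff takeT by blast
qed

lemma Lv_Bv: "Lv \<subseteq> Bv" using Lv_iff take_Bv by auto

lemma wBv: "w \<in> Bv" using take_Bv[of r] lr lenw by simp

lemma pv_notB: "pv \<notin> Bv"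
proof
  assume "pv \<in> Bv"
  then have "prefix v pv" using Bv_iff by blast
  then have "length v \<le> length pv" by (rule prefix_len)
  then show False using lenv lenw lr l1 by simp
qed

lemma pv_edge: "(pv, v) \<in> edges T"
proof -
  have s: "Suc (l - 1) = l" using l1 by simp
  have "l - 1 < length w" using lenw lr by simp
  then have "take (Suc (l - 1)) w = pv @ [w ! (l - 1)]" by (rule take_Suc_conv_app_nth)
  then have "v = pv @ [w ! (l - 1)]" using vtake s by simp
  then show ?thesis using vT takeT[of "l - 1"] edges_mem[of pv "w ! (l - 1)" T] by simp
qed

lemma path_edge: "l \<le> j \<Longrightarrow> j < r \<Longrightarrow> (take j w, take (Suc j) w) \<in> edges T"
proof -
  assume "l \<le> j" "j < r"
  then have eq: "take (Suc j) w = take j w @ [w ! j]" using lenw by (simp add: take_Suc_conv_app_nth)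
  have "(take j w, take j w @ [w ! j]) \<in> edges T"
    using edges_mem[of "take j w" "w ! j" T] takeT[of j] takeT[of "Suc j"] eq by simp
  then show ?thesis using eq by simp
qed

lemma path_edges_iff: "e \<in> path_edges w l (r - l) \<longleftrightarrow> (\<exists>j. l \<le> j \<and> j < r \<and> e = (take j w, take (Suc j) w))"
  unfolding path_edges_def using lr by auto

lemma edge_at_block:
  assumes e: "e \<in> edges T" and t: "fst e \<in> Bv - {w} \<or> snd e \<in> Bv - {w}"
  shows "e = (pv, v) \<or> e \<in> side_edges \<or> e \<in> path_edges w l (r - l)"
proof -
  obtain a i where ea: "e = (a, a @ [i])" and aT: "a \<in> T" and ciT: "a @ [i] \<in> T" using e by (rule edgesE)
  have sndcase: "e = (pv, v) \<or> e \<in> side_edges \<or> e \<in> path_edges w l (r - l)" if c: "a @ [i] \<in> Bv - {w}"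
  proof (cases "a @ [i] \<in> Lv")
    case True
    then obtain j where j: "l \<le> j" "j \<le> r" "a @ [i] = take j w" using Lv_iff by blast
    have jr: "j \<noteq> r" using c j lenw by auto
    have a: "a = take (j - 1) w" using j(3) butlast_take[of j w] j lenw by (metis butlast_snoc)
    show ?thesis
    proof (cases "j = l")
      case True
      then have "e = (pv, v)" using ea a j vtake by simp
      then show ?thesis by simp
    next
      case False
      then have "l \<le> j - 1" "j - 1 < r" "Suc (j - 1) = j" using j jr by auto
      then have "e \<in> path_edges w l (r - l)" unfolding path_edges_iff using ea a j(3) by metis
      then show ?thesis by simp
    qed
  next
    case False
    then have "e \<in> side_edges" using c e ea by (simp add: side_edges_def)
    then show ?thesis by simp
  qed
  show ?thesis
  proof (cases "a @ [i] \<in> Bv - {w}")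
    case True then show ?thesis by (rule sndcase)
  next
    case False
    then have aB: "a \<in> Bv - {w}" using t ea by auto
    then have va: "prefix v a" and nwa: "\<not> prefix w a" using Bv_iff by auto
    have "prefix v (a @ [i])" using va by simp
    then have "prefix w (a @ [i])" using False Bv_iff ciT by auto
    then have ciw: "a @ [i] = w" using nwa by simp
    then have "a = take (r - 1) w" using butlast_take[of r w] lenw by (metis butlast_snoc take_all order_refl)
    moreover have "w = take (Suc (r - 1)) w" using lenw lr by simp
    ultimately have "l \<le> r - 1 \<and> r - 1 < r \<and> e = (take (r - 1) w, take (Suc (r - 1)) w)"
      using ea ciw lr by auto
    then have "e \<in> path_edges w l (r - l)" unfolding path_edges_iff by blast
    then show ?thesis by simp
  qed
qed

lemma side_edges_props:
  assumes e: "e \<in> side_edges"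
  shows "{x \<in> T. prefix (snd e) x} \<subseteq> Bv" and "\<not> prefix (snd e) (fst e)"
    and "w \<notin> {x \<in> T. prefix (snd e) x}" and "v \<notin> {x \<in> T. prefix (snd e) x}"
proof -
  have eT: "e \<in> edges T" and cB: "snd e \<in> Bv" and cP: "snd e \<notin> Lv" using e by (auto simp: side_edges_def)
  obtain a i where ea: "e = (a, a @ [i])" using eT by (rule edgesE)
  have vc: "prefix v (snd e)" using cB Bv_iff by blast
  have ncw: "\<not> prefix (snd e) w" using cP vc by (simp add: path_L_def)
  have nwc: "\<not> prefix w (snd e)"
  proof
    assume "prefix w (snd e)"
    then have "snd e = w" using cB Bv_iff by blast
    then show False using ncw by simp
  qed
  show "{x \<in> T. prefix (snd e) x} \<subseteq> Bv"
  proof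
    fix x assume x: "x \<in> {x \<in> T. prefix (snd e) x}"
    then have xT: "x \<in> T" and cx: "prefix (snd e) x" by auto
    have "prefix v x" using vc cx by (rule prefix_order.trans)
    moreover have "\<not> prefix w x"
    proof
      assume "prefix w x"
      then have "prefix w (snd e) \<or> prefix (snd e) w" using cx prefix_same_cases by blast
      then show False using ncw nwc by blast
    qed
    ultimately show "x \<in> Bv" using xT Bv_iff by blast
  qed
  show "\<not> prefix (snd e) (fst e)" using ea prefix_len by fastforce
  show "w \<notin> {x \<in> T. prefix (snd e) x}" using ncw by simp
  show "v \<notin> {x \<in> T. prefix (snd e) x}"
  proof
    assume "v \<in> {x \<in> T. prefix (snd e) x}"
    then have "snd e = v" using vc by (auto intro: prefix_order.antisym)
    then show False using cP Lv_iff vtake lr by auto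
  qed
qed

lemma side_edges_sub: "side_edges \<subseteq> edges T - {(pv, v)}"
proof -
  have "v \<in> Lv" using Lv_iff vtake lr by auto
  then show ?thesis by (auto simp: side_edges_def)
qed

lemma path_touch_X: "\<forall>j. l \<le> j \<and> j < r \<longrightarrow> (\<forall>e\<in>trimmed_edges_X. (fst e = take j w \<or> snd e = take j w) \<longrightarrow>
                  (\<exists>j'. l \<le> j' \<and> j' < r \<and> e = (take j' w, take (Suc j') w)))"
proof (intro allI impI ballI)
  fix j e assume j: "l \<le> j \<and> j < r" and e: "e \<in> trimmed_edges_X" and t: "fst e = take j w \<or> snd e = take j w"
  have tB: "take j w \<in> Bv" using take_Bv j by auto
  have tw: "take j w \<noteq> w" using j lenw by (metis length_take min.absorb4 nat_neq_iff)
  have tBw: "take j w \<in> Bv - {w}" using tB tw by simp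
  have "fst e \<in> Bv - {w} \<or> snd e \<in> Bv - {w}"
  proof (cases "fst e = take j w")
    case True then show ?thesis using tBw by simp
  next
    case False then have "snd e = take j w" using t by simp
    then show ?thesis using tBw by simp
  qed
  then have "e = (pv, v) \<or> e \<in> side_edges \<or> e \<in> path_edges w l (r - l)" using edge_at_block e by blast
  then show "\<exists>j'. l \<le> j' \<and> j' < r \<and> e = (take j' w, take (Suc j') w)" using e path_edges_iff by blast
qed

lemma path_edges_in_X: "\<forall>j. l \<le> j \<and> j < r \<longrightarrow> (take j w, take (Suc j) w) \<in> trimmed_edges_X"
proof (intro allI impI)
  fix j assume j: "l \<le> j \<and> j < r"
  have "(take j w, take (Suc j) w) \<in> edges T" using path_edge j by auto
  moreover have "take j w \<noteq> pv" using j lenw lr by (metis diff_le_self le_less_trans length_take min.absorb4 not_less order.strict_trans1 l1 diff_less zero_less_one)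
  moreover have "take (Suc j) w \<in> Lv"
  proof -
    have "l \<le> Suc j \<and> Suc j \<le> r" using j by auto
    then show ?thesis using Lv_iff by blast
  qed
  ultimately show "(take j w, take (Suc j) w) \<in> trimmed_edges_X" by (auto simp: side_edges_def)
qed

lemma outer_edges_X_avoid: "\<forall>e\<in>outer_edges_X. fst e \<notin> Bv - {w} \<and> snd e \<notin> Bv - {w}"
  using edge_at_block by blast

text \<open>The side branches of the block (subtrees hanging off the path L_v inside B_v)
  can be cut from the expansion: flipping a whole side branch changes only the
  factor of its root edge, so this factor averages out, as long as the weight g
  depends on the configuration only through the spins at w and v.\<close>
lemma side_edges_cut:
  "(\<Sum>\<eta>\<in>block_confs T Bv x. g (\<eta> w) (\<eta> v) * ht_weight \<theta> (edges T - {(pv, v)}) \<eta>)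
   = (\<Sum>\<eta>\<in>block_confs T Bv x. g (\<eta> w) (\<eta> v) * ht_weight \<theta> trimmed_edges_X \<eta>)"
proof -
  have "(\<Sum>\<eta>\<in>block_confs T Bv x. g (\<eta> w) (\<eta> v) * ht_weight \<theta> (edges T - {(pv, v)}) \<eta>)
      = (\<Sum>\<eta>\<in>block_confs T Bv x. g (\<eta> w) (\<eta> v) * ht_weight \<theta> (edges T - {(pv, v)} - side_edges) \<eta>)"
    by (rule subtree_cuts[OF finite_tv _ _ side_edges_sub])
       (use finite_edges[OF finite_tv] side_edges_props in \<open>auto simp: flip_app\<close>)
  then show ?thesis by simp
qed

text \<open>The edge from the parent of v is expanded, the side branches
  are cut, and the path L_v transports the parent's spin to w with a factor \<theta> per
  edge; what remains is frozen except at w.\<close>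
lemma tree_marginal_weight:
  assumes x: "x \<in> confs T" and s: "s = 1 \<or> s = -1"
  shows "(\<Sum>\<eta>\<in>block_confs T Bv x. (if \<eta> w = s then 1 else 0) * ht_weight \<theta> (edges T) \<eta>)
     = (1 + \<theta> ^ (r - l + 1) * x pv * s)
       * (real (card {\<eta>\<in>block_confs T Bv x. \<eta> w = s}) * ht_weight \<theta> outer_edges_X (x(w := s)))"
proof -
  let ?g = "\<lambda>\<eta>::nat list \<Rightarrow> real. if \<eta> w = s then 1 else (0::real)"
  let ?E1 = "edges T - {(pv, v)}"
  have finE: "finite (edges T)" using finite_edges[OF finite_tv] .
  have parent: "(\<Sum>\<eta>\<in>block_confs T Bv x. ?g \<eta> * ht_weight \<theta> (edges T) \<eta>)
     = (\<Sum>\<eta>\<in>block_confs T Bv x. ?g \<eta> * ht_weight \<theta> ?E1 \<eta>)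
       + \<theta> * x pv * (\<Sum>\<eta>\<in>block_confs T Bv x. (?g \<eta> * \<eta> v) * ht_weight \<theta> ?E1 \<eta>)"
  proof -
    have "?g \<eta> * ht_weight \<theta> (edges T) \<eta>
        = ?g \<eta> * ht_weight \<theta> ?E1 \<eta> + \<theta> * x pv * ((?g \<eta> * \<eta> v) * ht_weight \<theta> ?E1 \<eta>)"
      if \<eta>: "\<eta> \<in> block_confs T Bv x" for \<eta>
    proof -
      have "\<eta> pv = x pv" using \<eta> takeT pv_notB by (auto simp: block_confs_def)
      then show ?thesis using ht_weight_remove[OF finE pv_edge, of \<theta> \<eta>] by (simp add: algebra_simps)
    qed
    then show ?thesis by (simp add: sum.distrib sum_distrib_left)
  qed
  have side1: "(\<Sum>\<eta>\<in>block_confs T Bv x. ?g \<eta> * ht_weight \<theta> ?E1 \<eta>)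
      = (\<Sum>\<eta>\<in>block_confs T Bv x. ?g \<eta> * ht_weight \<theta> trimmed_edges_X \<eta>)"
    using side_edges_cut[of "\<lambda>a b. if a = s then 1 else 0"] by simp
  have side2: "(\<Sum>\<eta>\<in>block_confs T Bv x. (?g \<eta> * \<eta> v) * ht_weight \<theta> ?E1 \<eta>)
      = (\<Sum>\<eta>\<in>block_confs T Bv x. (?g \<eta> * \<eta> v) * ht_weight \<theta> trimmed_edges_X \<eta>)"
    using side_edges_cut[of "\<lambda>a b. (if a = s then 1 else 0) * b"] by simp
  have path: "(\<Sum>\<eta>\<in>block_confs T Bv x. ?g \<eta> * ht_weight \<theta> trimmed_edges_X \<eta>)
      = (\<Sum>\<eta>\<in>block_confs T Bv x. ?g \<eta> * ht_weight \<theta> outer_edges_X \<eta>)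
    \<and> (\<Sum>\<eta>\<in>block_confs T Bv x. ?g \<eta> * \<eta> (take l w) * ht_weight \<theta> trimmed_edges_X \<eta>)
      = \<theta> ^ (r - l) * (\<Sum>\<eta>\<in>block_confs T Bv x. ?g \<eta> * \<eta> (take (l + (r - l)) w) * ht_weight \<theta> outer_edges_X \<eta>)"
    by (rule path_cut[OF finite_tv _ _ _ _ path_edges_in_X path_touch_X])
       (use finE lr lenw take_Bv takeT in auto)
  have tw: "take (l + (r - l)) w = w" using lr lenw by simp
  have at_w: "(\<Sum>\<eta>\<in>block_confs T Bv x. ?g \<eta> * \<eta> w * ht_weight \<theta> outer_edges_X \<eta>)
      = s * (\<Sum>\<eta>\<in>block_confs T Bv x. ?g \<eta> * ht_weight \<theta> outer_edges_X \<eta>)"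
    unfolding sum_distrib_left by (rule sum.cong) auto
  have frozen: "(\<Sum>\<eta>\<in>block_confs T Bv x. ?g \<eta> * ht_weight \<theta> outer_edges_X \<eta>)
      = real (card {\<eta>\<in>block_confs T Bv x. \<eta> w = s}) * ht_weight \<theta> outer_edges_X (x(w := s))"
    by (rule sum_frozen_weight[OF finite_tv x wBv Bv_T]) (use finE outer_edges_X_avoid in auto)
  show ?thesis
    using parent side1 side2 path at_w frozen unfolding tw vtake[symmetric]
    by (simp add: algebra_simps)
qed

lemma F_char: "x \<in> F \<Longrightarrow> prefix v x \<Longrightarrow> x \<in> Lv \<or> prefix w x"
proof -
  assume xF: "x \<in> F" and vx: "prefix v x"
  obtain v' where v': "v' \<in> level b h l" "prefix v' x" and c: "prefix x (wf v') \<or> prefix (wf v') x"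
    using F_pre[OF xF] by blast
  have "v' = v" using prefix_eq_len[OF v'(2) vx] v'(1) lenv by (simp add: level_def)
  then show ?thesis using c vx by (auto simp: path_L_def)
qed

lemma Lv_F: "Lv \<subseteq> F" using vL by (auto simp: forest_F_def)

lemma subtree_w_F: "subtree b h w \<subseteq> F" using vL by (auto simp: forest_F_def)

text \<open>The parent of v is not in F: in the forest, L_v has nothing above v.\<close>
lemma pv_notF: "pv \<notin> F"
proof
  assume "pv \<in> F"
  then have "l \<le> length pv" by (rule F_len)
  then show False using lenw lr l1 by simp
qed

lemma path_touch_Y: "\<forall>j. l \<le> j \<and> j < r \<longrightarrow> (\<forall>e\<in>edges F. (fst e = take j w \<or> snd e = take j w) \<longrightarrow>
                  (\<exists>j'. l \<le> j' \<and> j' < r \<and> e = (take j' w, take (Suc j') w)))"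
proof (intro allI impI ballI)
  fix j e assume j: "l \<le> j \<and> j < r" and e: "e \<in> edges F" and t: "fst e = take j w \<or> snd e = take j w"
  obtain a i where ea: "e = (a, a @ [i])" and aF: "a \<in> F" and cF: "a @ [i] \<in> F" using e by (rule edgesE)
  show "\<exists>j'. l \<le> j' \<and> j' < r \<and> e = (take j' w, take (Suc j') w)"
  proof (cases "snd e = take j w")
    case True
    then have c: "a @ [i] = take j w" using ea by simp
    have "j \<noteq> l"
    proof
      assume "j = l"
      then have "a = pv" using c butlast_take[of l w] lenw lr by (metis butlast_snoc less_imp_le)
      then show False using aF pv_notF by simp
    qed
    then have j': "l \<le> j - 1" "j - 1 < r" "Suc (j - 1) = j" using j by auto
    have "a = take (j - 1) w" using c butlast_take[of j w] j lenw by (metis butlast_snoc less_imp_le)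
    then show ?thesis using j' ea c by metis
  next
    case False
    then have a: "a = take j w" using t ea by simp
    have va: "prefix v (a @ [i])" using a take_prefix_take[of l j w] j vtake by simp
    have "a @ [i] \<in> Lv \<or> prefix w (a @ [i])" using F_char[OF cF va] .
    then have pw: "prefix (a @ [i]) w"
    proof
      assume "a @ [i] \<in> Lv" then show ?thesis by (simp add: path_L_def)
    next
      assume h: "prefix w (a @ [i])"
      have "\<not> prefix w a" using a j lenw prefix_len by fastforce
      then show ?thesis using h by simp
    qed
    have "a @ [i] = take (Suc j) w" using prefix_take_len[OF pw] a j lenw by simp
    then show ?thesis using j ea a by blast
  qed
qed

lemma path_edges_in_Y: "\<forall>j. l \<le> j \<and> j < r \<longrightarrow> (take j w, take (Suc j) w) \<in> edges F"
proof (intro allI impI)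
  fix j assume j: "l \<le> j \<and> j < r"
  have eq: "take (Suc j) w = take j w @ [w ! j]" using j lenw by (simp add: take_Suc_conv_app_nth)
  have "take j w \<in> Lv" "take (Suc j) w \<in> Lv" using take_Lv j by auto
  then have "take j w \<in> F" "take j w @ [w ! j] \<in> F" using Lv_F eq by auto
  then show "(take j w, take (Suc j) w) \<in> edges F" using eq edges_mem by simp
qed

lemma outer_edges_Y_avoid: "\<forall>e\<in>outer_edges_Y. fst e \<notin> Lv - {w} \<and> snd e \<notin> Lv - {w}"
proof (intro ballI)
  fix e assume e: "e \<in> outer_edges_Y"
  have "fst e \<noteq> take j w \<and> snd e \<noteq> take j w" if j: "l \<le> j" "j < r" for j
    using path_touch_Y j e path_edges_iff by blast
  moreover have "x \<in> Lv - {w} \<Longrightarrow> \<exists>j. l \<le> j \<and> j < r \<and> x = take j w" for x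
    using Lv_iff lenw by (metis DiffE insertI1 le_neq_implies_less take_all order_refl)
  ultimately show "fst e \<notin> Lv - {w} \<and> snd e \<notin> Lv - {w}" by blast
qed

text \<open>High-temperature expansion of the weight of {spin s at w} for the path update of
  Y: the path can be cut entirely.\<close>
lemma forest_marginal_weight:
  assumes y: "y \<in> confs F" and s: "s = 1 \<or> s = -1"
  shows "(\<Sum>\<eta>\<in>block_confs F Lv y. (if \<eta> w = s then 1 else 0) * ht_weight \<theta> (edges F) \<eta>)
     = real (card {\<eta>\<in>block_confs F Lv y. \<eta> w = s}) * ht_weight \<theta> outer_edges_Y (y(w := s))"
proof -
  have finF: "finite F" using F_T finite_tv finite_subset by blast
  have finE: "finite (edges F)" using finite_edges[OF finF] .
  have pathB: "\<forall>j. l \<le> j \<and> j < r \<longrightarrow> take j w \<in> Lv \<and> take j w \<in> F"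
    using take_Lv Lv_F by auto
  have pc: "(\<Sum>\<eta>\<in>block_confs F Lv y. (if \<eta> w = s then 1 else 0) * ht_weight \<theta> (edges F) \<eta>)
     = (\<Sum>\<eta>\<in>block_confs F Lv y. (if \<eta> w = s then 1 else 0) * ht_weight \<theta> (edges F - path_edges w l (r - l)) \<eta>)"
  proof -
    have lr': "l \<le> r" using lr by simp
    have rw': "r = length w" using lenw by simp
    show ?thesis
      using path_cut[OF finF finE lr' rw' pathB path_edges_in_Y path_touch_Y, where k="r - l" and \<sigma>=y and s=s and \<theta>=\<theta>]
      by (simp only: order_refl simp_thms)
  qed
  have wP: "w \<in> Lv" using take_Lv[of r] lr lenw by simp
  have cs: "(\<Sum>\<eta>\<in>block_confs F Lv y. (if \<eta> w = s then 1 else 0) * ht_weight \<theta> outer_edges_Y \<eta>)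
     = real (card {\<eta>\<in>block_confs F Lv y. \<eta> w = s}) * ht_weight \<theta> outer_edges_Y (y(w := s))"
    by (rule sum_frozen_weight[OF finF y wP Lv_F]) (use finE outer_edges_Y_avoid in auto)
  show ?thesis using pc cs by simp
qed

lemma path_edge_into_w: "e \<in> edges V \<Longrightarrow> snd e = w \<Longrightarrow> e \<in> path_edges w l (r - l)"
proof -
  assume e: "e \<in> edges V" and sw: "snd e = w"
  obtain a i where ea: "e = (a, a @ [i])" using e by (rule edgesE)
  have "a = take (r - 1) w" using ea sw butlast_take[of r w] lenw by (metis butlast_snoc take_all order_refl snd_conv)
  moreover have "w = take (Suc (r - 1)) w" using lenw lr by simp
  ultimately have "l \<le> r - 1 \<and> r - 1 < r \<and> e = (take (r - 1) w, take (Suc (r - 1)) w)" using ea sw lr by auto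
  then show ?thesis unfolding path_edges_iff by blast
qed

lemma w_not_path_fst: "e \<in> path_edges w l (r - l) \<Longrightarrow> fst e \<noteq> w"
  unfolding path_edges_iff using lenw by (auto dest: take_inj[of _ w "length w"])

lemma outer_edges_X_at_w: "{e\<in>outer_edges_X. fst e = w \<or> snd e = w} = child_edges_w"
proof (intro set_eqI iffI)
  fix e assume "e \<in> {e\<in>outer_edges_X. fst e = w \<or> snd e = w}"
  then have e: "e \<in> outer_edges_X" and t: "fst e = w \<or> snd e = w" by auto
  have "snd e \<noteq> w" using path_edge_into_w e by blast
  then show "e \<in> child_edges_w" using e t by auto
next
  fix e assume e: "e \<in> child_edges_w"
  then have eT: "e \<in> edges T" and fw: "fst e = w" by auto
  obtain a i where ea: "e = (a, a @ [i])" using eT by (rule edgesE)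
  have "e \<noteq> (pv, v)" using fw lenw lr l1 by (auto dest: arg_cong[of _ _ length])
  moreover have "e \<notin> side_edges"
  proof
    assume "e \<in> side_edges"
    then have "snd e \<in> Bv" by (simp add: side_edges_def)
    then show False using ea fw Bv_iff by auto
  qed
  moreover have "e \<notin> path_edges w l (r - l)" using w_not_path_fst fw by blast
  ultimately show "e \<in> {e\<in>outer_edges_X. fst e = w \<or> snd e = w}" using eT fw by auto
qed

lemma outer_edges_Y_at_w: "{e\<in>outer_edges_Y. fst e = w \<or> snd e = w} = child_edges_w"
proof (intro set_eqI iffI)
  fix e assume "e \<in> {e\<in>outer_edges_Y. fst e = w \<or> snd e = w}"
  then have e: "e \<in> outer_edges_Y" and t: "fst e = w \<or> snd e = w" by auto
  have "snd e \<noteq> w" using path_edge_into_w e by blast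
  then have "fst e = w" using t by simp
  moreover have "e \<in> edges T" using e F_T unfolding edges_def by blast
  ultimately show "e \<in> child_edges_w" by auto
next
  fix e assume e: "e \<in> child_edges_w"
  then have eT: "e \<in> edges T" and fw: "fst e = w" by auto
  obtain a i where ea: "e = (a, a @ [i])" and ciT: "a @ [i] \<in> T" using eT by (rule edgesE)
  have "a @ [i] \<in> subtree b h w" using ea fw ciT by (simp add: subtree_def)
  moreover have "w \<in> subtree b h w" using wT by (simp add: subtree_def)
  ultimately have "e \<in> edges F" using subtree_w_F ea fw edges_mem by auto
  moreover have "e \<notin> path_edges w l (r - l)" using w_not_path_fst fw by blast
  ultimately show "e \<in> {e\<in>outer_edges_Y. fst e = w \<or> snd e = w}" using fw by auto
qed

text \<open>The marginal at w of the block update of X, in closed form: apart from the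
  weights of the edges from w to its children, it depends on the outside only
  through the spin at the parent of v, damped by \<theta>^(r-l+1).\<close>
lemma tree_block_marginal:
  assumes \<beta>: "\<beta> > 0" and x: "x \<in> confs T" and s: "s = 1 \<or> s = -1"
  defines "\<epsilon> \<equiv> tanh \<beta> ^ (r - l + 1) * x pv"
    and "c \<equiv> \<lambda>t. ht_weight (tanh \<beta>) child_edges_w (x(w := t))"
  shows "(\<Sum>\<eta>\<in>{\<eta>\<in>confs T. \<eta> w = s}. block_kernel \<beta> T Bv x \<eta>)
         = (1 + \<epsilon> * s) * c s / ((1 + \<epsilon>) * c 1 + (1 - \<epsilon>) * c (-1))"
proof -
  define \<theta> where "\<theta> = tanh \<beta>"
  have \<theta>: "\<bar>\<theta>\<bar> < 1" using \<beta> tanh_real_lt_1 by (simp add: \<theta>_def)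
  define Z where "Z = (\<lambda>t. \<Sum>\<eta>\<in>block_confs T Bv x. (if \<eta> w = t then 1 else 0) * ht_weight \<theta> (edges T) \<eta>)"
  define N where "N = real (card {\<eta>\<in>block_confs T Bv x. \<eta> w = 1})"
  define K where "K = ht_weight \<theta> {e\<in>outer_edges_X. \<not> (fst e = w \<or> snd e = w)} x"
  have N: "N > 0" using card_pinned_pos[OF finite_tv x wBv wT] by (simp add: N_def)
  have K: "K > 0" unfolding K_def by (rule ht_weight_pos[OF _ \<theta>]) (use confs_val[OF x] in blast)
  have Zt: "Z t = (N * K) * ((1 + \<epsilon> * t) * c t)" if t: "t = 1 \<or> t = -1" for t
  proof -
    have "real (card {\<eta>\<in>block_confs T Bv x. \<eta> w = t}) = N"
      using t card_pinned_sym[OF wBv wT] by (auto simp: N_def)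
    moreover have "ht_weight \<theta> outer_edges_X (x(w := t)) = c t * K"
      using split_w[of outer_edges_X \<theta> x w t] outer_edges_X_at_w finite_edges[OF finite_tv]
      by (simp add: c_def K_def \<theta>_def)
    ultimately show ?thesis
      using tree_marginal_weight[OF x t, of \<theta>] by (simp add: Z_def \<epsilon>_def \<theta>_def algebra_simps)
  qed
  have "(\<Sum>\<eta>\<in>{\<eta>\<in>confs T. \<eta> w = s}. block_kernel \<beta> T Bv x \<eta>) = Z s / (Z 1 + Z (-1))"
    by (rule block_kernel_marginal_ratio[OF finite_tv x]) (simp add: Z_def \<theta>_def)
  also have "\<dots> = (N * K) * ((1 + \<epsilon> * s) * c s) / ((N * K) * ((1 + \<epsilon>) * c 1 + (1 - \<epsilon>) * c (-1)))"
    using Zt[OF s] Zt[of 1] Zt[of "-1"] by (simp add: algebra_simps)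
  finally show ?thesis using N K by simp
qed

text \<open>The marginal at w of the path update of Y: the path L_v is a tree component
  of F with nothing above v, so only the children of w matter.\<close>
lemma forest_block_marginal:
  assumes \<beta>: "\<beta> > 0" and y: "y \<in> confs F" and s: "s = 1 \<or> s = -1"
  defines "c \<equiv> \<lambda>t. ht_weight (tanh \<beta>) child_edges_w (y(w := t))"
  shows "(\<Sum>\<eta>\<in>{\<eta>\<in>confs F. \<eta> w = s}. block_kernel \<beta> F Lv y \<eta>) = c s / (c 1 + c (-1))"
proof -
  define \<theta> where "\<theta> = tanh \<beta>"
  have \<theta>: "\<bar>\<theta>\<bar> < 1" using \<beta> tanh_real_lt_1 by (simp add: \<theta>_def)
  have finF: "finite F" using F_T finite_tv finite_subset by blast
  have wF: "w \<in> F" using Lv_F w_Lv by auto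
  define Z where "Z = (\<lambda>t. \<Sum>\<eta>\<in>block_confs F Lv y. (if \<eta> w = t then 1 else 0) * ht_weight \<theta> (edges F) \<eta>)"
  define N where "N = real (card {\<eta>\<in>block_confs F Lv y. \<eta> w = 1})"
  define K where "K = ht_weight \<theta> {e\<in>outer_edges_Y. \<not> (fst e = w \<or> snd e = w)} y"
  have N: "N > 0" using card_pinned_pos[OF finF y w_Lv wF] by (simp add: N_def)
  have K: "K > 0" unfolding K_def by (rule ht_weight_pos[OF _ \<theta>]) (use confs_val[OF y] in blast)
  have Zt: "Z t = (N * K) * c t" if t: "t = 1 \<or> t = -1" for t
  proof -
    have "real (card {\<eta>\<in>block_confs F Lv y. \<eta> w = t}) = N"
      using t card_pinned_sym[OF w_Lv wF] by (auto simp: N_def)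
    moreover have "ht_weight \<theta> outer_edges_Y (y(w := t)) = c t * K"
      using split_w[of outer_edges_Y \<theta> y w t] outer_edges_Y_at_w finite_edges[OF finF]
      by (simp add: c_def K_def \<theta>_def)
    ultimately show ?thesis using forest_marginal_weight[OF y t, of \<theta>] by (simp add: Z_def)
  qed
  have "(\<Sum>\<eta>\<in>{\<eta>\<in>confs F. \<eta> w = s}. block_kernel \<beta> F Lv y \<eta>) = Z s / (Z 1 + Z (-1))"
    by (rule block_kernel_marginal_ratio[OF finF y]) (simp add: Z_def \<theta>_def)
  also have "\<dots> = (N * K) * c s / ((N * K) * (c 1 + c (-1)))"
    using Zt[OF s] Zt[of 1] Zt[of "-1"] by (simp add: algebra_simps)
  finally show ?thesis using N K by simp
qed

lemma block_marginal_diff: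
  assumes \<beta>: "\<beta> > 0" and x: "x \<in> confs T" and y: "y \<in> confs F"
    and agree: "\<forall>u\<in>subtree b h w. x u = y u" and s: "s = 1 \<or> s = -1"
  shows "\<bar>(\<Sum>\<eta>\<in>{\<eta>\<in>confs T. \<eta> w = s}. block_kernel \<beta> T Bv x \<eta>)
          - (\<Sum>\<eta>\<in>{\<eta>\<in>confs F. \<eta> w = s}. block_kernel \<beta> F Lv y \<eta>)\<bar> \<le> tanh \<beta> ^ (r - l)"
proof -
  define \<theta> where "\<theta> = tanh \<beta>"
  have \<theta>: "0 \<le> \<theta>" "\<theta> < 1" using \<beta> tanh_real_lt_1 by (auto simp: \<theta>_def)
  define \<epsilon> where "\<epsilon> = \<theta> ^ (r - l + 1) * x pv"
  define c where "c = (\<lambda>t. ht_weight \<theta> child_edges_w (x(w := t)))"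
  \<comment> \<open>The child edges of w lie in T_w, where X and Y agree.\<close>
  have cY: "ht_weight \<theta> child_edges_w (y(w := t)) = c t" for t
    unfolding c_def ht_weight_def
  proof (rule prod.cong[OF refl])
    fix e assume "e \<in> child_edges_w"
    then obtain i where e: "e = (w, w @ [i])" and "w @ [i] \<in> T" by (auto elim: edgesE)
    then have "x (w @ [i]) = y (w @ [i])" using agree by (simp add: subtree_def)
    then show "1 + \<theta> * (y(w := t)) (fst e) * (y(w := t)) (snd e)
             = 1 + \<theta> * (x(w := t)) (fst e) * (x(w := t)) (snd e)" using e by simp
  qed
  have c_pos: "c 1 > 0" "c (-1) > 0"
    unfolding c_def by (rule ht_weight_pos, use confs_val[OF x] \<theta> in auto)+
  have eps: "\<bar>\<epsilon>\<bar> \<le> \<theta> ^ (r - l)"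
  proof -
    have "\<bar>\<epsilon>\<bar> = \<theta> ^ (r - l) * \<theta>" using confs_val[OF x, of pv] \<theta> by (auto simp: \<epsilon>_def abs_mult)
    also have "\<dots> \<le> \<theta> ^ (r - l)" using \<theta> by (simp add: mult_left_le)
    finally show ?thesis .
  qed
  have eps1: "\<bar>\<epsilon>\<bar> \<le> 1" using eps \<theta> by (meson order_trans power_le_one less_imp_le)
  have "\<bar>(1 + \<epsilon> * s) * c s / ((1 + \<epsilon>) * c 1 + (1 - \<epsilon>) * c (-1)) - c s / (c 1 + c (-1))\<bar> \<le> \<bar>\<epsilon>\<bar>"
    using s ratio_perturbation[OF c_pos eps1] ratio_perturbation_minus[OF c_pos eps1] by auto
  then show ?thesis
    unfolding tree_block_marginal[OF \<beta> x s] forest_block_marginal[OF \<beta> y s] \<theta>_def[symmetric] cY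
    using eps unfolding \<epsilon>_def c_def by linarith
qed

lemma subtree_edge_closed:
  assumes u: "u \<in> subtree b h w" and uw: "u \<noteq> w"
    and e: "e \<in> edges T" and tu: "fst e = u \<or> snd e = u"
  shows "fst e \<in> subtree b h w \<and> snd e \<in> subtree b h w"
proof -
  obtain a i where ea: "e = (a, a @ [i])" and aT: "a \<in> T" and cT: "a @ [i] \<in> T" using e by (rule edgesE)
  have wu: "prefix w u" using u by (simp add: subtree_def)
  show ?thesis
  proof (cases "a = u")
    case True then show ?thesis using ea aT cT wu by (simp add: subtree_def)
  next
    case False
    then have c: "a @ [i] = u" using tu ea by simp
    then have "prefix w a" using wu uw by auto
    then show ?thesis using ea aT cT wu c by (simp add: subtree_def)
  qed
qed

text \<open>A single site u of T_w other than w has all its neighbours in T_w, in T and in F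
  alike, so its update has the same law under X and Y when they agree on T_w.\<close>
lemma single_site_marginal_agree:
  assumes \<beta>: "\<beta> > 0" and x: "x \<in> confs T" and y: "y \<in> confs F"
    and agree: "\<forall>u\<in>subtree b h w. x u = y u" and u: "u \<in> subtree b h w" and uw: "u \<noteq> w"
    and t: "t = 1 \<or> t = -1"
  shows "(\<Sum>\<eta>\<in>{\<eta>\<in>confs T. \<eta> u = t}. block_kernel \<beta> T {u} x \<eta>)
       = (\<Sum>\<eta>\<in>{\<eta>\<in>confs F. \<eta> u = t}. block_kernel \<beta> F {u} y \<eta>)"
proof -
  have finT: "finite T" by (rule finite_tv)
  have finF: "finite F" using F_T finite_tv finite_subset by blast
  have uT: "u \<in> T" using u by (simp add: subtree_def)
  have uF: "u \<in> F" using u subtree_w_F by auto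
  have ends: "fst e \<in> subtree b h w \<and> snd e \<in> subtree b h w"
    if "e \<in> edges T" "fst e = u \<or> snd e = u" for e
    using subtree_edge_closed[OF u uw that] .
  have Eu: "{e\<in>edges T. fst e = u \<or> snd e = u} = {e\<in>edges F. fst e = u \<or> snd e = u}"
  proof (intro set_eqI iffI)
    fix e assume e: "e \<in> {e\<in>edges T. fst e = u \<or> snd e = u}"
    then have "fst e \<in> F" "snd e \<in> F" using ends subtree_w_F by blast+
    moreover obtain a i where "e = (a, a @ [i])" using e by (auto elim: edgesE)
    ultimately show "e \<in> {e\<in>edges F. fst e = u \<or> snd e = u}" using e by (auto simp: edges_mem)
  next
    fix e assume "e \<in> {e\<in>edges F. fst e = u \<or> snd e = u}"
    then show "e \<in> {e\<in>edges T. fst e = u \<or> snd e = u}" using F_T by (auto simp: edges_def)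
  qed
  have vals: "ht_weight (tanh \<beta>) {e\<in>edges T. fst e = u \<or> snd e = u} (x(u := t'))
            = ht_weight (tanh \<beta>) {e\<in>edges T. fst e = u \<or> snd e = u} (y(u := t'))" for t'
    unfolding ht_weight_def
  proof (rule prod.cong[OF refl])
    fix e assume "e \<in> {e\<in>edges T. fst e = u \<or> snd e = u}"
    then have "fst e \<in> subtree b h w" "snd e \<in> subtree b h w" using ends by auto
    then show "1 + tanh \<beta> * (x(u := t')) (fst e) * (x(u := t')) (snd e) = 1 + tanh \<beta> * (y(u := t')) (fst e) * (y(u := t')) (snd e)"
      using agree by simp
  qed
  show ?thesis
    unfolding single_site_marginal[OF finT x uT \<beta> t] single_site_marginal[OF finF y uF \<beta> t] vals Eu[symmetric] ..
qed

lemma G_Bv: "u \<in> G \<Longrightarrow> u \<in> Bv \<Longrightarrow> u = w"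
proof -
  assume uG: "u \<in> G" and uB: "u \<in> Bv"
  obtain v' where v': "v' \<in> level b h l" "prefix (wf v') u" "prefix v' u" using G_pre[OF uG] by blast
  have vu: "prefix v u" using uB Bv_iff by blast
  have "v' = v" using prefix_eq_len[OF v'(3) vu] v'(1) lenv by (simp add: level_def)
  then have "prefix w u" using v' by simp
  then show "u = w" using uB Bv_iff by blast
qed

lemma subtree_w_G: "subtree b h w \<subseteq> G" using vL by (auto simp: set_G_def)

lemma leave_rate_block:
  assumes \<beta>: "\<beta> > 0" and xy: "(x, y) \<in> {(x, y) \<in> confs T \<times> confs F. \<forall>u\<in>G. x u = y u}"
  shows "(\<Sum>z'\<in>confs T \<times> confs F - {(x, y) \<in> confs T \<times> confs F. \<forall>u\<in>G. x u = y u}.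
            coupled_rate (confs T) (confs F) (block_kernel \<beta> T Bv) (block_kernel \<beta> F Lv)
              (\<lambda>a. a w) (\<lambda>a. a w) (x, y) z')
         \<le> tanh \<beta> ^ (r - l)"
proof (rule leave_rate_pinned_site[OF finite_tv _ _ G_F _ _ _ xy])
  show "finite F" using F_T finite_tv finite_subset by blast
  show "G \<subseteq> T" using G_F F_T by blast
  show "w \<in> G" using subtree_w_G wT by (auto simp: subtree_def)
  show "Bv \<inter> G \<subseteq> {w}" "Lv \<inter> G \<subseteq> {w}" using G_Bv Lv_Bv by auto
  have "x w = 1 \<or> x w = -1" using xy confs_val by blast
  then show "\<bar>(\<Sum>\<eta>\<in>{\<eta>\<in>confs T. \<eta> w = - x w}. block_kernel \<beta> T Bv x \<eta>)
             - (\<Sum>\<eta>\<in>{\<eta>\<in>confs F. \<eta> w = - x w}. block_kernel \<beta> F Lv y \<eta>)\<bar> \<le> tanh \<beta> ^ (r - l)"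
    using block_marginal_diff[OF \<beta>, of x y "- x w"] xy subtree_w_G by auto
qed

end

lemma sum_blocks:
  assumes fin1: "finite I" and fin2: "finite J" and inj: "inj_on Bf I"
    and disj: "\<forall>i\<in>I. \<forall>u\<in>J. Bf i \<noteq> {u}"
  shows "(\<Sum>B\<in>Bf ` I \<union> (\<lambda>u. {u}) ` J. k B) = (\<Sum>i\<in>I. k (Bf i)) + (\<Sum>u\<in>J. k {u})"
proof -
  have "(\<Sum>B\<in>Bf ` I \<union> (\<lambda>u. {u}) ` J. k B) = (\<Sum>B\<in>Bf ` I. k B) + (\<Sum>B\<in>(\<lambda>u. {u}) ` J. k B)"
    by (rule sum.union_disjoint) (use fin1 fin2 disj in auto)
  also have "(\<Sum>B\<in>Bf ` I. k B) = (\<Sum>i\<in>I. k (Bf i))" by (rule sum.reindex_cong[OF inj refl refl])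
  also have "(\<Sum>B\<in>(\<lambda>u. {u}) ` J. k B) = (\<Sum>u\<in>J. k {u})" by (rule sum.reindex_cong[of "\<lambda>u. {u}"]) (auto simp: inj_on_def)
  finally show ?thesis .
qed

section \<open>The global coupling\<close>

context tree_setting
begin

abbreviation "H \<equiv> level b h l"
abbreviation "W \<equiv> wf ` H"

abbreviation "agree_on_G \<equiv> {(x, y) \<in> confs T \<times> confs F. \<forall>u\<in>G. x u = y u}"

lemma block_setting_at: "v \<in> H \<Longrightarrow> block_setting b h l r wf v"
  by (simp add: block_setting_def block_setting_axioms_def tree_setting_axioms)

lemma finite_F: "finite F"
  using F_T finite_tv finite_subset by blast

lemma W_F: "W \<subseteq> F"
  using block_setting.w_Lv[OF block_setting_at] block_setting.Lv_F[OF block_setting_at] by blast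

text \<open>The blocks B_v (and the paths L_v) are pairwise distinct and contain both
  v and w_v, so they are not singletons; hence the block rates split as sums over
  H and over single sites.\<close>
lemma block_indexing:
  shows "inj_on (\<lambda>v. block_B b h v (wf v)) H" and "inj_on (\<lambda>v. path_L v (wf v)) H"
    and "\<forall>v\<in>H. \<forall>u. block_B b h v (wf v) \<noteq> {u}" and "\<forall>v\<in>H. \<forall>u. path_L v (wf v) \<noteq> {u}"
proof -
  have L: "v \<in> path_L v (wf v)" "wf v \<in> path_L v (wf v)" "v \<noteq> wf v"
    and LB: "path_L v (wf v) \<subseteq> block_B b h v (wf v)" if "v \<in> H" for v
    using block_setting.v_Lv[OF block_setting_at[OF that]] block_setting.w_Lv[OF block_setting_at[OF that]]
      block_setting.vw[OF block_setting_at[OF that]] block_setting.Lv_Bv[OF block_setting_at[OF that]]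
    by auto
  have same_level: "v1 = v2" if "v1 \<in> H" "v2 \<in> H" "prefix v2 v1" for v1 v2
    using that prefix_eq_len[of v2 v1 v1] by (simp add: level_def)
  show "inj_on (\<lambda>v. block_B b h v (wf v)) H"
  proof (rule inj_onI)
    fix v1 v2 assume v: "v1 \<in> H" "v2 \<in> H" and eq: "block_B b h v1 (wf v1) = block_B b h v2 (wf v2)"
    have "v1 \<in> block_B b h v2 (wf v2)" using L(1)[OF v(1)] LB[OF v(1)] eq by blast
    then have "prefix v2 v1" using block_setting.Bv_iff[OF block_setting_at[OF v(2)]] by blast
    then show "v1 = v2" using same_level v by blast
  qed
  show "inj_on (\<lambda>v. path_L v (wf v)) H"
  proof (rule inj_onI)
    fix v1 v2 assume v: "v1 \<in> H" "v2 \<in> H" and eq: "path_L v1 (wf v1) = path_L v2 (wf v2)"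
    have "v1 \<in> path_L v2 (wf v2)" using L(1)[OF v(1)] eq by simp
    then have "prefix v2 v1" by (simp add: path_L_def)
    then show "v1 = v2" using same_level v by blast
  qed
  show "\<forall>v\<in>H. \<forall>u. block_B b h v (wf v) \<noteq> {u}"
  proof (intro ballI allI notI)
    fix v u assume v: "v \<in> H" and "block_B b h v (wf v) = {u}"
    then have "v = u" "wf v = u" using L(1,2)[OF v] LB[OF v] by auto
    then show False using L(3)[OF v] by simp
  qed
  show "\<forall>v\<in>H. \<forall>u. path_L v (wf v) \<noteq> {u}"
  proof (intro ballI allI notI)
    fix v u assume v: "v \<in> H" and "path_L v (wf v) = {u}"
    then have "v = u" "wf v = u" using L(1,2)[OF v] by auto
    then show False using L(3)[OF v] by simp
  qed
qed

lemma rate_X_split: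
  "block_rate \<beta> T (blocks_X b h l wf) x x'
   = (\<Sum>v\<in>H. block_kernel \<beta> T (block_B b h v (wf v)) x x')
     + (\<Sum>u\<in>F - W. block_kernel \<beta> T {u} x x') + (\<Sum>u\<in>T - F. block_kernel \<beta> T {u} x x')"
proof -
  have finH: "finite H" using finite_tv finite_subset by (fastforce simp: level_def)
  have "block_rate \<beta> T (blocks_X b h l wf) x x'
      = (\<Sum>v\<in>H. block_kernel \<beta> T (block_B b h v (wf v)) x x') + (\<Sum>u\<in>T - W. block_kernel \<beta> T {u} x x')"
    unfolding block_rate_def blocks_X_def
    by (rule sum_blocks[OF finH _ block_indexing(1)]) (use finite_tv block_indexing(3) in auto)
  also have "T - W = (F - W) \<union> (T - F)" using F_T W_F by auto
  also have "(\<Sum>u\<in>(F - W) \<union> (T - F). block_kernel \<beta> T {u} x x')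
      = (\<Sum>u\<in>F - W. block_kernel \<beta> T {u} x x') + (\<Sum>u\<in>T - F. block_kernel \<beta> T {u} x x')"
    by (rule sum.union_disjoint) (use finite_tv finite_F in auto)
  finally show ?thesis by simp
qed

lemma rate_Y_split:
  "block_rate \<beta> F (blocks_Y b h l wf) y y'
   = (\<Sum>v\<in>H. block_kernel \<beta> F (path_L v (wf v)) y y') + (\<Sum>u\<in>F - W. block_kernel \<beta> F {u} y y')"
proof -
  have finH: "finite H" using finite_tv finite_subset by (fastforce simp: level_def)
  show ?thesis
    unfolding block_rate_def blocks_Y_def
    by (rule sum_blocks[OF finH _ block_indexing(2)]) (use finite_F block_indexing(4) in auto)
qed

text \<open>The coupling: block B_v of X is coupled with the path L_v of Y through the
  spin at w_v, a singleton of F with its copy in T through its own spin, and a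
  singleton of T outside F is updated in X alone.\<close>
definition coupling :: "real \<Rightarrow> (nat list \<Rightarrow> real) \<times> (nat list \<Rightarrow> real)
    \<Rightarrow> (nat list \<Rightarrow> real) \<times> (nat list \<Rightarrow> real) \<Rightarrow> real" where
  "coupling \<beta> z z' =
      (\<Sum>v\<in>H. coupled_rate (confs T) (confs F) (block_kernel \<beta> T (block_B b h v (wf v)))
               (block_kernel \<beta> F (path_L v (wf v))) (\<lambda>a. a (wf v)) (\<lambda>a. a (wf v)) z z')
    + (\<Sum>u\<in>F - W. coupled_rate (confs T) (confs F) (block_kernel \<beta> T {u}) (block_kernel \<beta> F {u})
                   (\<lambda>a. a u) (\<lambda>a. a u) z z')
    + (\<Sum>u\<in>T - F. coupled_rate (confs T) (confs F) (block_kernel \<beta> T {u}) (\<lambda>_ _. 0)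
                   (\<lambda>a. a u) (\<lambda>a. a u) z z')"

lemma coupling_is_markov_coupling:
  "markov_coupling (confs T) (block_rate \<beta> T (blocks_X b h l wf))
     (confs F) (block_rate \<beta> F (blocks_Y b h l wf)) (coupling \<beta>)"
  unfolding markov_coupling_def
proof (intro conjI ballI impI)
  fix z z' show "0 \<le> coupling \<beta> z z'"
    unfolding coupling_def
    by (intro add_nonneg_nonneg sum_nonneg coupled_rate_nonneg) (auto simp: block_kernel_nonneg)
next
  fix x y x' :: "nat list \<Rightarrow> real" assume y: "y \<in> confs F" and xx: "x' \<noteq> x"
  show "(\<Sum>y'\<in>confs F. coupling \<beta> (x, y) (x', y')) = block_rate \<beta> T (blocks_X b h l wf) x x'"
    unfolding coupling_def rate_X_split sum.distrib
    by (simp add: sum.swap[where A = "confs F"] coupled_rate_marg_fst[OF finite_confs[OF finite_F] y xx])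
next
  fix x y y' :: "nat list \<Rightarrow> real" assume x: "x \<in> confs T" and yy: "y' \<noteq> y"
  show "(\<Sum>x'\<in>confs T. coupling \<beta> (x, y) (x', y')) = block_rate \<beta> F (blocks_Y b h l wf) y y'"
    unfolding coupling_def rate_Y_split sum.distrib
    by (simp add: sum.swap[where A = "confs T"] coupled_rate_marg_snd[OF finite_confs[OF finite_tv] x yy])
qed

text \<open>A singleton of F in G only sees spins of the subtree T_{w_v} containing it,
  so its coupled update never leaves agree_on_G; nor does any other singleton,
  since it does not touch G.\<close>
lemma leave_rate_singleton:
  assumes \<beta>: "\<beta> > 0" and xy: "(x, y) \<in> agree_on_G" and u: "u \<in> F - W"
  shows "(\<Sum>z'\<in>confs T \<times> confs F - agree_on_G.
           coupled_rate (confs T) (confs F) (block_kernel \<beta> T {u}) (block_kernel \<beta> F {u})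
             (\<lambda>a. a u) (\<lambda>a. a u) (x, y) z') \<le> 0"
proof (cases "u \<in> G")
  case True
  then obtain v where v: "v \<in> H" and us: "u \<in> subtree b h (wf v)" by (auto simp: set_G_def)
  interpret block_setting b h l r wf v by (rule block_setting_at[OF v])
  have "u \<noteq> w" using u v by auto
  moreover have "\<forall>u\<in>subtree b h w. x u = y u" using xy subtree_w_G by auto
  moreover have "x u = 1 \<or> x u = -1" using xy confs_val by blast
  ultimately have "(\<Sum>\<eta>\<in>{\<eta>\<in>confs T. \<eta> u = - x u}. block_kernel \<beta> T {u} x \<eta>)
      = (\<Sum>\<eta>\<in>{\<eta>\<in>confs F. \<eta> u = - x u}. block_kernel \<beta> F {u} y \<eta>)"
    using single_site_marginal_agree[OF \<beta> _ _ _ us] xy by auto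
  then show ?thesis
    by (intro leave_rate_pinned_site[OF finite_tv finite_F _ G_F True _ _ xy])
       (use G_F F_T in auto)
next
  case False
  have "\<forall>u'\<in>G. y' u' = y u'" if "block_kernel \<beta> F {u} y y' > 0" for y'
    using block_kernel_support[of \<beta> F "{u}" y y'] that False G_F by (auto simp: block_confs_def)
  then show ?thesis
    by (intro leave_rate_single_off_G[OF finite_tv finite_F _ False _ xy])
       (use G_F F_T u block_kernel_nonneg in auto)
qed

text \<open>The coupled chain leaves agree_on_G at rate at most \<theta>^(r-l) per block, and
  there are b^l blocks.\<close>
lemma coupling_leave_rate:
  assumes \<beta>: "\<beta> > 0" and z: "z \<in> agree_on_G"
  shows "(\<Sum>z'\<in>confs T \<times> confs F - agree_on_G. coupling \<beta> z z') \<le> tanh \<beta> ^ (r - l) * real b ^ l"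
proof -
  obtain x y where zxy: "z = (x, y)" by (cases z)
  have xy: "(x, y) \<in> agree_on_G" using z zxy by simp
  let ?R = "confs T \<times> confs F - agree_on_G"
  have blocks: "(\<Sum>z'\<in>?R. coupled_rate (confs T) (confs F) (block_kernel \<beta> T (block_B b h v (wf v)))
               (block_kernel \<beta> F (path_L v (wf v))) (\<lambda>a. a (wf v)) (\<lambda>a. a (wf v)) (x, y) z')
        \<le> tanh \<beta> ^ (r - l)" if "v \<in> H" for v
    using block_setting.leave_rate_block[OF block_setting_at[OF that] \<beta> xy] .
  have off_F: "(\<Sum>z'\<in>?R. coupled_rate (confs T) (confs F) (block_kernel \<beta> T {u}) (\<lambda>_ _. 0)
                   (\<lambda>a. a u) (\<lambda>a. a u) (x, y) z') \<le> 0" if "u \<in> T - F" for u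
    using leave_rate_single_off_G[OF finite_tv finite_F _ _ _ xy, of u "\<lambda>_ _. 0"] that G_F F_T
    by auto
  have "(\<Sum>z'\<in>?R. coupling \<beta> z z')
      \<le> (\<Sum>v\<in>H. tanh \<beta> ^ (r - l)) + (\<Sum>u\<in>F - W. 0) + (\<Sum>u\<in>T - F. 0)"
    unfolding coupling_def zxy sum.distrib sum.swap[where A = ?R]
    by (intro add_mono sum_mono blocks off_F leave_rate_singleton[OF \<beta> xy])
  also have "\<dots> = tanh \<beta> ^ (r - l) * real b ^ l"
    using card_level[of l h b] lr rh by simp
  finally show ?thesis .
qed

end

theorem mainTheorem18:
  fixes b h l r :: nat and \<beta> :: real and w :: "nat list \<Rightarrow> nat list"
    and X0 Y0 :: "nat list \<Rightarrow> real"
  assumes "b \<ge> 2" and "\<beta> > 0"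
    and "1 \<le> l" and "l < r" and "r \<le> h"
    and "\<forall>v\<in>level b h l. w v \<in> level b h r \<and> prefix v (w v)"
    and "X0 \<in> confs (tree_vertices b h)" and "Y0 \<in> confs (forest_F b h l w)"
    and "\<forall>u\<in>set_G b h l w. X0 u = Y0 u"
  shows "\<exists>Q. markov_coupling
              (confs (tree_vertices b h)) (block_rate \<beta> (tree_vertices b h) (blocks_X b h l w))
              (confs (forest_F b h l w)) (block_rate \<beta> (forest_F b h l w) (blocks_Y b h l w)) Q
          \<and> (\<forall>t\<ge>0. stay_prob (confs (tree_vertices b h) \<times> confs (forest_F b h l w)) Q
                      {(x, y) \<in> confs (tree_vertices b h) \<times> confs (forest_F b h l w).
                         \<forall>u\<in>set_G b h l w. x u = y u}
                      (X0, Y0) t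
                    \<ge> exp (- ((tanh \<beta>) ^ (r - l) * real b ^ l * t)))"
proof -
  interpret tree_setting b h l r w
    using assms(3-6) by unfold_locales auto
  let ?Q = "coupling \<beta>"
  have survival: "stay_prob (confs T \<times> confs F) ?Q agree_on_G (X0, Y0) t
      \<ge> exp (- (tanh \<beta> ^ (r - l) * real b ^ l) * t)" if t: "t \<ge> 0" for t
  proof (rule stay_prob_lower[OF _ _ _ t])
    show "finite (confs T \<times> confs F)" using finite_confs finite_tv finite_F by blast
    show "agree_on_G \<subseteq> confs T \<times> confs F" by auto
    show "0 \<le> tanh \<beta> ^ (r - l) * real b ^ l" using assms(2) by simp
    show "(X0, Y0) \<in> agree_on_G" using assms(7-9) by simp
    show "\<forall>z\<in>agree_on_G. \<forall>z'\<in>agree_on_G. z' \<noteq> z \<longrightarrow> 0 \<le> ?Q z z'"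
      using coupling_is_markov_coupling[of \<beta>] by (auto simp: markov_coupling_def)
    show "\<forall>z\<in>agree_on_G. (\<Sum>z'\<in>confs T \<times> confs F - agree_on_G. ?Q z z') \<le> tanh \<beta> ^ (r - l) * real b ^ l"
      using coupling_leave_rate[OF assms(2)] by blast
  qed
  show ?thesis
    using coupling_is_markov_coupling[of \<beta>] survival by auto
qed

end
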